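(* Let $\alpha_t<\beta_t<x^{\ast}$ be real, let $u^t\ge0$ be real with $\overline{u}^t=[u^t+\frac12]$, and let $D_n$ be a Hölder continuous function on $[\alpha_t,\beta_t]$. Define $$S^\infty(x)=e^{(K_0+(u^t-\overline{u}^t)F_0)\sigma_3}\,\Pi(x)\,e^{-(K(x)+(u^t-\overline{u}^t)F(x))\sigma_3}.$$ Then: (1) $S^\infty$ is analytic in $\mathbb{C}\setminus\mathbb{R}$; (2) $S^\infty_+(x)=S^\infty_-(x)\begin{pmatrix}e^{-2\pi i u^t}&0\\0&e^{2\pi iu^t}\end{pmatrix}$ for $x\in(\beta_t,x^{\ast})$; (3) $S^\infty_+(x)=S^\infty_-(x)\begin{pmatrix}0&e^{2D_n(x)}\\-e^{-2D_n(x)}&0\end{pmatrix}$ for $x\in(\alpha_t,\beta_t)$; (4) $S^\infty(x)=I+O(x^{-1})$ as $x\to\infty$. In particular, if $u^t=\overline{u}^t$ and $D_n\equiv0$, then $S^\infty=\Pi$.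
   Context: Notation: $\sigma_3=\mathrm{diag}(1,-1)$ and $e^{a\sigma_3}=\mathrm{diag}(e^a,e^{-a})$. Subscripts $\pm$ denote boundary values from the upper and lower half-planes. Let $\gamma(x)=\left(\frac{x-\beta_t}{x-\alpha_t}\right)^{1/4}$, analytic on $\mathbb{C}\setminus[\alpha_t,\beta_t]$ with $\gamma\to1$ at $\infty$, and $$\Pi(x)=\begin{pmatrix}\frac{\gamma+\gamma^{-1}}2&\frac{\gamma-\gamma^{-1}}{2i}\\-\frac{\gamma-\gamma^{-1}}{2i}&\frac{\gamma+\gamma^{-1}}2\end{pmatrix}.$$ The function $F$: $\sqrt{(x-\alpha_t)(x-\beta_t)}$ is analytic off $[\alpha_t,\beta_t]$ and $\sim x$ at $\infty$. Set $r(x)=\frac{\sqrt{(x-\alpha_t)(x-\beta_t)}}{x-\beta_t}$ and $A=\sqrt{\frac{x^{\ast}-\alpha_t}{x^{\ast}-\beta_t}}>0$. Then $F(x)=\log\frac{A-r(x)}{A+r(x)}$ (principal logarithm) and $F_0=\log\frac{A-1}{A+1}$. The function $K$: $$K(x)=\frac{\sqrt{(x-\alpha_t)(x-\beta_t)}}{2\pi i}\int_{\alpha_t}^{\beta_t}\frac{2D_n(s)ds}{(\sqrt{(s-\alpha_t)(s-\beta_t)})_+(s-x)},\qquad K_0=-\frac1{2\pi i}\int_{\alpha_t}^{\beta_t}\frac{2D_n(s)ds}{(\sqrt{(s-\alpha_t)(s-\beta_t)})_+}.$$ *)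

theory Defs
  imports "HOL-Analysis.Analysis" "HOL-Library.Landau_Symbols"
begin

definition mat2 :: "complex \<Rightarrow> complex \<Rightarrow> complex \<Rightarrow> complex \<Rightarrow> complex^2^2" where
  "mat2 a b c d = (\<chi> i j. if i = 1 then (if j = 1 then a else b) else (if j = 1 then c else d))"

definition exp_sigma3 :: "complex \<Rightarrow> complex^2^2" where
  "exp_sigma3 a = mat2 (exp a) 0 0 (exp (- a))"

definition bv_plus :: "(complex \<Rightarrow> 'b::t2_space) \<Rightarrow> real \<Rightarrow> 'b" where
  "bv_plus f x = Lim (at (complex_of_real x) within {z. Im z > 0}) f"

definition bv_minus :: "(complex \<Rightarrow> 'b::t2_space) \<Rightarrow> real \<Rightarrow> 'b" where
  "bv_minus f x = Lim (at (complex_of_real x) within {z. Im z < 0}) f"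

text \<open>sqrt((x-alpha)(x-beta)): analytic off [alpha,beta], ~ x at infinity.
  Realised as (x-beta) * principal sqrt((x-alpha)/(x-beta)).\<close>
definition sqrtR :: "real \<Rightarrow> real \<Rightarrow> complex \<Rightarrow> complex" where
  "sqrtR \<alpha> \<beta> z = (z - of_real \<beta>) * csqrt ((z - of_real \<alpha>) / (z - of_real \<beta>))"

definition gam :: "real \<Rightarrow> real \<Rightarrow> complex \<Rightarrow> complex" where
  "gam \<alpha> \<beta> z = ((z - of_real \<beta>) / (z - of_real \<alpha>)) powr (1/4)"

definition PiM :: "real \<Rightarrow> real \<Rightarrow> complex \<Rightarrow> complex^2^2" where
  "PiM \<alpha> \<beta> z = (let g = gam \<alpha> \<beta> z in
     mat2 ((g + inverse g) / 2) ((g - inverse g) / (2 * \<i>))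
          (- (g - inverse g) / (2 * \<i>)) ((g + inverse g) / 2))"

definition rfun :: "real \<Rightarrow> real \<Rightarrow> complex \<Rightarrow> complex" where
  "rfun \<alpha> \<beta> z = sqrtR \<alpha> \<beta> z / (z - of_real \<beta>)"

definition Aconst :: "real \<Rightarrow> real \<Rightarrow> real \<Rightarrow> real" where
  "Aconst \<alpha> \<beta> xs = sqrt ((xs - \<alpha>) / (xs - \<beta>))"

definition Ffun :: "real \<Rightarrow> real \<Rightarrow> real \<Rightarrow> complex \<Rightarrow> complex" where
  "Ffun \<alpha> \<beta> xs z = Ln ((of_real (Aconst \<alpha> \<beta> xs) - rfun \<alpha> \<beta> z) /
                          (of_real (Aconst \<alpha> \<beta> xs) + rfun \<alpha> \<beta> z))"

definition F0 :: "real \<Rightarrow> real \<Rightarrow> real \<Rightarrow> complex" where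
  "F0 \<alpha> \<beta> xs = Ln (of_real ((Aconst \<alpha> \<beta> xs - 1) / (Aconst \<alpha> \<beta> xs + 1)))"

definition Kfun :: "real \<Rightarrow> real \<Rightarrow> (real \<Rightarrow> real) \<Rightarrow> complex \<Rightarrow> complex" where
  "Kfun \<alpha> \<beta> D z = sqrtR \<alpha> \<beta> z / (2 * pi * \<i>) *
     integral {\<alpha>..\<beta>} (\<lambda>s. 2 * of_real (D s) /
        (bv_plus (sqrtR \<alpha> \<beta>) s * (of_real s - z)))"

definition K0 :: "real \<Rightarrow> real \<Rightarrow> (real \<Rightarrow> real) \<Rightarrow> complex" where
  "K0 \<alpha> \<beta> D = - 1 / (2 * pi * \<i>) *
     integral {\<alpha>..\<beta>} (\<lambda>s. 2 * of_real (D s) / bv_plus (sqrtR \<alpha> \<beta>) s)"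

definition ubar :: "real \<Rightarrow> real" where
  "ubar u = of_int \<lfloor>u + 1/2\<rfloor>"

definition Sinf :: "real \<Rightarrow> real \<Rightarrow> real \<Rightarrow> real \<Rightarrow> (real \<Rightarrow> real) \<Rightarrow> complex \<Rightarrow> complex^2^2" where
  "Sinf \<alpha> \<beta> xs u D z =
     exp_sigma3 (K0 \<alpha> \<beta> D + of_real (u - ubar u) * F0 \<alpha> \<beta> xs) ** PiM \<alpha> \<beta> z **
     exp_sigma3 (- (Kfun \<alpha> \<beta> D z + of_real (u - ubar u) * Ffun \<alpha> \<beta> xs z))"

definition holder_on :: "real set \<Rightarrow> (real \<Rightarrow> real) \<Rightarrow> bool" where
  "holder_on S f \<longleftrightarrow> (\<exists>C a. C > 0 \<and> 0 < a \<and> a \<le> 1 \<and>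
      (\<forall>s\<in>S. \<forall>t\<in>S. \<bar>f s - f t\<bar> \<le> C * \<bar>s - t\<bar> powr a))"

end

theory Submission
  imports Defs
begin

text \<open>Write \<open>S\<^sup>\<infinity> = e\<^bsup>c\<^sub>0\<sigma>\<^sub>3\<^esup> \<Pi>(\<gamma>) e\<^bsup>-m\<sigma>\<^sub>3\<^esup>\<close> with \<open>m = K + (u - ubar u)F\<close> (\<open>S_exponent\<close>) and
  \<open>c\<^sub>0 = K\<^sub>0 + (u - ubar u)F\<^sub>0\<close> (\<open>S_exponent_inf\<close>);
  every claim then reduces to the behaviour of \<open>\<gamma>\<close>, \<open>K\<close> and \<open>F\<close>.
  On \<open>(\<beta>, x\<^sup>*)\<close> the function \<open>\<gamma>\<close> is continuous while \<open>F\<close> jumps by \<open>2\<pi>\<i>\<close>, because \<open>(A - r)/(A + r)\<close>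
  is negative there; so \<open>m\<close> jumps by \<open>2\<pi>\<i>(u - ubar u)\<close> and the integer \<open>ubar u\<close> disappears under \<open>exp\<close>.
  On \<open>(\<alpha>, \<beta>)\<close> we have \<open>\<gamma>\<^sub>+ = \<i>\<gamma>\<^sub>-\<close>, which turns \<open>\<Pi>\<close> into \<open>\<Pi>\<close> times a rotation, and
  \<open>m\<^sub>+ + m\<^sub>- = 2D\<close>: for \<open>K\<close> this is the Plemelj--Sokhotski formula for the Cauchy transform of
  \<open>2D/\<surd>\<^sub>+\<close>, for \<open>F\<close> it follows from \<open>r\<^sub>+ = -r\<^sub>-\<close>. At infinity \<open>\<gamma>\<close>, \<open>K\<close> and \<open>F\<close> tend to \<open>1\<close>, \<open>K\<^sub>0\<close> and
  \<open>F\<^sub>0\<close> at rate \<open>O(1/z)\<close>, and the entries of \<open>S\<^sup>\<infinity>\<close> depend smoothly on them.\<close>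

section \<open>The matrix algebra\<close>

lemma mat2_nth: "mat2 a b c d $ i $ j = (if i = 1 then (if j = 1 then a else b) else (if j = 1 then c else d))"
  by (simp add: mat2_def)

lemma mat2_mult: "mat2 a b c d ** mat2 e f g h = mat2 (a*e+b*g) (a*f+b*h) (c*e+d*g) (c*f+d*h)"
  unfolding matrix_matrix_mult_def by (simp add: vec_eq_iff mat2_nth sum_2)

lemma mat2_eq_iff: "mat2 a b c d = mat2 e f g h \<longleftrightarrow> a = e \<and> b = f \<and> c = g \<and> d = h"
  by (simp add: vec_eq_iff mat2_nth forall_2)

lemma mat2_1: "mat2 1 0 0 1 = mat 1"
  by (simp add: vec_eq_iff mat2_nth mat_def forall_2)

lemma tendsto_mat2:
  assumes "(fa \<longlongrightarrow> a) F" "(fb \<longlongrightarrow> b) F" "(fc \<longlongrightarrow> c) F" "(fd \<longlongrightarrow> d) F"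
  shows "((\<lambda>x. mat2 (fa x) (fb x) (fc x) (fd x)) \<longlongrightarrow> mat2 a b c d) F"
  unfolding mat2_def by (intro tendsto_vec_lambda) (auto simp: assms)

lemma norm_le_sum_entries: "norm (A :: 'a::real_normed_vector^'n^'m) \<le> (\<Sum>i\<in>UNIV. \<Sum>j\<in>UNIV. norm (A $ i $ j))"
proof -
  have "norm A \<le> (\<Sum>i\<in>UNIV. norm (A $ i))"
    unfolding norm_vec_def by (rule L2_set_le_sum) simp
  also have "\<dots> \<le> (\<Sum>i\<in>UNIV. \<Sum>j\<in>UNIV. norm (A $ i $ j))"
    by (intro sum_mono) (unfold norm_vec_def, rule L2_set_le_sum, simp)
  finally show ?thesis .
qed

definition Pi_diag :: "complex \<Rightarrow> complex" where "Pi_diag g = (g + inverse g) / 2"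
definition Pi_offdiag :: "complex \<Rightarrow> complex" where "Pi_offdiag g = (g - inverse g) / (2 * \<i>)"

definition dressed_Pi :: "complex \<Rightarrow> complex \<Rightarrow> complex \<Rightarrow> complex^2^2" where
  "dressed_Pi c0 g m = exp_sigma3 c0 ** mat2 (Pi_diag g) (Pi_offdiag g) (- Pi_offdiag g) (Pi_diag g) ** exp_sigma3 (- m)"

lemma dressed_Pi_eq: "dressed_Pi c0 g m = mat2 (exp c0 * Pi_diag g * exp (-m)) (exp c0 * Pi_offdiag g * exp m)
   (- (exp (-c0) * Pi_offdiag g * exp (-m))) (exp (-c0) * Pi_diag g * exp m)"
  unfolding dressed_Pi_def exp_sigma3_def by (simp add: mat2_mult)

lemma Sinf_eq_dressed_Pi: "Sinf a b xs u D z = dressed_Pi (K0 a b D + of_real (u - ubar u) * F0 a b xs) (gam a b z)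
    (Kfun a b D z + of_real (u - ubar u) * Ffun a b xs z)"
  unfolding Sinf_def dressed_Pi_def PiM_def Pi_diag_def Pi_offdiag_def Let_def minus_divide_left ..

lemma dressed_Pi_1: "dressed_Pi c 1 c = mat 1"
  by (simp add: dressed_Pi_eq Pi_diag_def Pi_offdiag_def exp_minus field_simps mat2_1)

lemma dressed_Pi_diagonal_jump: "dressed_Pi c0 g m1 = dressed_Pi c0 g m2 ** mat2 (exp (-(m1 - m2))) 0 0 (exp (m1 - m2))"
  unfolding dressed_Pi_eq mat2_mult mat2_eq_iff
  by (simp add: exp_diff exp_minus field_simps)

lemma dressed_Pi_rotation_jump:
  assumes "g1 = \<i> * g2" "m1 + m2 = d" "g2 \<noteq> 0"
  shows "dressed_Pi c0 g1 m1 = dressed_Pi c0 g2 m2 ** mat2 0 (exp d) (- exp (-d)) 0"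
proof -
  have diag: "Pi_diag g1 = - Pi_offdiag g2" and offdiag: "Pi_offdiag g1 = Pi_diag g2"
    using assms(3) unfolding assms(1) Pi_diag_def Pi_offdiag_def by (auto simp: field_simps)
  have m1: "m1 = d - m2" using assms(2) by (simp add: algebra_simps)
  show ?thesis unfolding dressed_Pi_eq mat2_mult mat2_eq_iff diag offdiag m1
    by (simp add: exp_diff exp_minus field_simps)
qed

lemma tendsto_dressed_Pi:
  assumes "(G \<longlongrightarrow> g) F" "(M \<longlongrightarrow> m) F" "g \<noteq> 0"
  shows "((\<lambda>z. dressed_Pi c0 (G z) (M z)) \<longlongrightarrow> dressed_Pi c0 g m) F"
  unfolding dressed_Pi_eq Pi_diag_def Pi_offdiag_def
  by (intro tendsto_mat2 tendsto_intros assms) simp_all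

lemma holomorphic_dressed_Pi_entry:
  assumes "G holomorphic_on S" "M holomorphic_on S" "\<And>z. z \<in> S \<Longrightarrow> G z \<noteq> 0"
  shows "(\<lambda>z. dressed_Pi c0 (G z) (M z) $ i $ j) holomorphic_on S"
  unfolding dressed_Pi_eq mat2_nth Pi_diag_def Pi_offdiag_def
  by (cases "i = 1"; cases "j = 1"; simp; intro holomorphic_intros assms; simp add: assms)

section \<open>Cauchy transforms on an interval and the Plemelj--Sokhotski formula\<close>

lemma integrable_abs_powr_symmetric:
  fixes d e :: real assumes "d \<ge> 0" "e > -1"
  shows "(\<lambda>t. \<bar>t\<bar> powr e) integrable_on {-d..d}"
proof -
  have r: "(\<lambda>t. t powr e) integrable_on {0..d}" by (rule integrable_on_powr_from_0) (use assms in auto)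
  then have r': "(\<lambda>t. \<bar>t\<bar> powr e) integrable_on {0..d}"
    by (rule integrable_eq) auto
  have "(\<lambda>t. \<bar>- t\<bar> powr e) integrable_on {-d..-0}"
    using r' Henstock_Kurzweil_Integration.integrable_reflect_real[where f = "\<lambda>t. \<bar>t\<bar> powr e" and a = 0 and b = d] by simp
  then have l: "(\<lambda>t. \<bar>t\<bar> powr e) integrable_on {-d..0}" by simp
  show ?thesis
    by (rule Henstock_Kurzweil_Integration.integrable_combine[OF _ _ l r']) (use assms in auto)
qed

lemma absolutely_integrable_continuous_mult:
  fixes g \<phi> :: "real \<Rightarrow> complex"
  assumes g: "g absolutely_integrable_on S" and phi: "continuous_on S \<phi>" and S: "compact S"
  shows "(\<lambda>s. \<phi> s * g s) absolutely_integrable_on S"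
proof (rule absolutely_integrable_bounded_measurable_product[OF bilinear_times])
  show SL: "S \<in> sets lebesgue" using lmeasurable_compact[OF S] fmeasurableD by blast
  show "\<phi> \<in> borel_measurable (lebesgue_on S)"
    using phi SL by (intro continuous_imp_measurable_on_sets_lebesgue)
  show "bounded (\<phi> ` S)" using phi S compact_continuous_image compact_imp_bounded by blast
qed (rule g)

definition cauchy_transform :: "real \<Rightarrow> real \<Rightarrow> (real \<Rightarrow> complex) \<Rightarrow> complex \<Rightarrow> complex" where
  "cauchy_transform a b g z = integral {a..b} (\<lambda>s. g s / (of_real s - z))"

lemma absolutely_integrable_cauchy_kernel:
  fixes g :: "real \<Rightarrow> complex"
  assumes g: "g absolutely_integrable_on {a..b}" and z: "z \<notin> of_real ` {a..b}"
  shows "(\<lambda>s. g s / (of_real s - z)) absolutely_integrable_on {a..b}"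
proof -
  have nz: "of_real s - z \<noteq> 0" if "s \<in> {a..b}" for s using z that by auto
  have "continuous_on {a..b} (\<lambda>s. 1 / (of_real s - z))"
    by (rule continuous_on_divide) (auto intro!: continuous_intros dest: nz)
  from absolutely_integrable_continuous_mult[OF g this] show ?thesis by (simp add: field_simps)
qed

lemma cauchy_transform_diff:
  assumes g: "g absolutely_integrable_on {a..b}" and z: "z \<notin> of_real ` {a..b}" and w: "w \<notin> of_real ` {a..b}"
  shows "cauchy_transform a b g w - cauchy_transform a b g z = (w - z) * cauchy_transform a b (\<lambda>s. g s / (of_real s - z)) w"
proof -
  have i1: "(\<lambda>s. g s / (of_real s - w)) integrable_on {a..b}"
    using absolutely_integrable_cauchy_kernel[OF g w] set_lebesgue_integral_eq_integral(1) by blast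
  have i2: "(\<lambda>s. g s / (of_real s - z)) integrable_on {a..b}"
    using absolutely_integrable_cauchy_kernel[OF g z] set_lebesgue_integral_eq_integral(1) by blast
  have "cauchy_transform a b g w - cauchy_transform a b g z = integral {a..b} (\<lambda>s. g s / (of_real s - w) - g s / (of_real s - z))"
    unfolding cauchy_transform_def by (rule integral_diff[OF i1 i2, symmetric])
  also have "\<dots> = integral {a..b} (\<lambda>s. (w - z) * (g s / (of_real s - z) / (of_real s - w)))"
  proof (rule integral_cong)
    fix s assume s: "s \<in> {a..b}"
    have "of_real s - w \<noteq> 0" "of_real s - z \<noteq> 0" using z w s by auto
    then show "g s / (of_real s - w) - g s / (of_real s - z) = (w - z) * (g s / (of_real s - z) / (of_real s - w))"
      by (simp add: field_simps)
  qed
  also have "\<dots> = (w - z) * cauchy_transform a b (\<lambda>s. g s / (of_real s - z)) w"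
    unfolding cauchy_transform_def by (rule integral_mult_right)
  finally show ?thesis .
qed

lemma norm_cauchy_transform_le:
  assumes g: "g absolutely_integrable_on {a..b}" and d: "d > 0" and dz: "\<And>s. s \<in> {a..b} \<Longrightarrow> d \<le> norm (of_real s - z)"
  shows "norm (cauchy_transform a b g z) \<le> integral {a..b} (\<lambda>s. norm (g s)) / d"
proof -
  have z: "z \<notin> of_real ` {a..b}" using dz d by force
  have i1: "(\<lambda>s. g s / (of_real s - z)) integrable_on {a..b}"
    using absolutely_integrable_cauchy_kernel[OF g z] set_lebesgue_integral_eq_integral(1) by blast
  have ng: "(\<lambda>s. norm (g s)) integrable_on {a..b}"
    using g absolutely_integrable_on_def by blast
  have "norm (cauchy_transform a b g z) \<le> integral {a..b} (\<lambda>s. norm (g s) / d)"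
    unfolding cauchy_transform_def
  proof (rule integral_norm_bound_integral[OF i1])
    show "(\<lambda>s. norm (g s) / d) integrable_on {a..b}" using integrable_on_divide[OF ng] by simp
    fix s assume s: "s \<in> {a..b}"
    have "norm (g s / (of_real s - z)) = norm (g s) / norm (of_real s - z)" by (simp add: norm_divide)
    also have "\<dots> \<le> norm (g s) / d" using dz[OF s] d by (intro divide_left_mono mult_pos_pos) auto
    finally show "norm (g s / (of_real s - z)) \<le> norm (g s) / d" .
  qed
  also have "\<dots> = integral {a..b} (\<lambda>s. norm (g s)) / d" by simp
  finally show ?thesis .
qed

lemma isCont_cauchy_transform:
  assumes g: "g absolutely_integrable_on {a..b}" and ab: "a \<le> b" and z: "z \<notin> of_real ` {a..b}"
  shows "isCont (cauchy_transform a b g) z"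
proof -
  let ?K = "(of_real :: real \<Rightarrow> complex) ` {a..b}"
  have cK: "compact ?K" by (intro compact_continuous_image continuous_intros) auto
  have "?K \<noteq> {}" using ab by auto
  then have d: "infdist z ?K > 0" using z cK compact_imp_closed infdist_pos_not_in_closed by blast
  define d where "d = infdist z ?K"
  have dz: "d \<le> norm (of_real s - z)" if "s \<in> {a..b}" for s
  proof -
    have "d \<le> dist z (of_real s)" unfolding d_def using that by (intro infdist_le) auto
    then show ?thesis by (simp add: dist_norm norm_minus_commute)
  qed
  define G where "G s = g s / (of_real s - z)" for s
  have G: "G absolutely_integrable_on {a..b}" unfolding G_def by (rule absolutely_integrable_cauchy_kernel[OF g z])
  define N where "N = integral {a..b} (\<lambda>s. norm (G s))"
  have "((\<lambda>w. cauchy_transform a b g w - cauchy_transform a b g z) \<longlongrightarrow> 0) (at z)"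
  proof (rule Lim_null_comparison)
    show "\<forall>\<^sub>F w in at z. norm (cauchy_transform a b g w - cauchy_transform a b g z) \<le> norm (w - z) * (N / (d/2))"
    proof (rule eventually_mono[OF eventually_at_ball'[of "d/2" z UNIV]])
      show "0 < d/2" using d d_def by simp
      fix w assume "w \<in> ball z (d/2) \<and> w \<noteq> z \<and> w \<in> UNIV"
      then have w: "w \<in> ball z (d/2)" by simp
      have dw: "d/2 \<le> norm (of_real s - w)" if "s \<in> {a..b}" for s
      proof -
        have "norm (of_real s - z) \<le> norm (of_real s - w) + norm (w - z)" using norm_triangle_ineq[of "of_real s - w" "w - z"] by simp
        moreover have "norm (w - z) < d/2" using w by (simp add: dist_norm norm_minus_commute)
        ultimately show ?thesis using dz[OF that] by linarith
      qed
      have wK: "w \<notin> ?K" using dw d d_def by force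
      have "norm (cauchy_transform a b g w - cauchy_transform a b g z) = norm (w - z) * norm (cauchy_transform a b G w)"
        unfolding cauchy_transform_diff[OF g z wK] G_def by (simp add: norm_mult)
      also have "\<dots> \<le> norm (w - z) * (N / (d/2))"
        unfolding N_def using d d_def by (intro mult_left_mono norm_cauchy_transform_le[OF G] dw) auto
      finally show "norm (cauchy_transform a b g w - cauchy_transform a b g z) \<le> norm (w - z) * (N / (d/2))" .
    qed
    have "((\<lambda>w. norm (w - z) * (N / (d/2))) \<longlongrightarrow> norm (z - z) * (N / (d/2))) (at z)"
      by (intro tendsto_intros)
    then show "((\<lambda>w. norm (w - z) * (N / (d/2))) \<longlongrightarrow> 0) (at z)" by simp
  qed
  then show ?thesis unfolding isCont_def using Lim_null by blast
qed

lemma cauchy_transform_has_field_derivative: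
  assumes g: "g absolutely_integrable_on {a..b}" and ab: "a \<le> b" and z: "z \<notin> of_real ` {a..b}"
  shows "(cauchy_transform a b g has_field_derivative cauchy_transform a b (\<lambda>s. g s / (of_real s - z)) z) (at z)"
proof -
  let ?K = "(of_real :: real \<Rightarrow> complex) ` {a..b}"
  define G where "G = (\<lambda>s. g s / (of_real s - z))"
  have G: "G absolutely_integrable_on {a..b}" unfolding G_def by (rule absolutely_integrable_cauchy_kernel[OF g z])
  have cK: "closed ?K" by (intro compact_imp_closed compact_continuous_image continuous_intros) auto
  have op: "open (- ?K)" using cK by auto
  have ev: "\<forall>\<^sub>F w in at z. (cauchy_transform a b g w - cauchy_transform a b g z) / (w - z) = cauchy_transform a b G w"
  proof -
    have "\<forall>\<^sub>F w in at z. w \<in> - ?K \<and> w \<noteq> z"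
      using op z eventually_at_topological by (intro eventually_conj) (auto simp: eventually_at_filter eventually_nhds)
    then show ?thesis
      by eventually_elim (auto simp: cauchy_transform_diff[OF g z] G_def)
  qed
  have "(cauchy_transform a b G \<longlongrightarrow> cauchy_transform a b G z) (at z)"
    using isCont_cauchy_transform[OF G ab z] isCont_def by blast
  then have "((\<lambda>w. (cauchy_transform a b g w - cauchy_transform a b g z) / (w - z)) \<longlongrightarrow> cauchy_transform a b G z) (at z)"
    using tendsto_cong[OF ev] by simp
  then show ?thesis unfolding has_field_derivative_iff G_def .
qed

lemma holomorphic_cauchy_transform:
  assumes g: "g absolutely_integrable_on {a..b}" and ab: "a \<le> b"
  shows "cauchy_transform a b g holomorphic_on (- (of_real ` {a..b}))"
  unfolding holomorphic_on_def
  using cauchy_transform_has_field_derivative[OF g ab] field_differentiable_at_within field_differentiable_def by fastforce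

lemma integrable_on_Diff_finite_iff:
  fixes f :: "real \<Rightarrow> 'a::banach"
  assumes "finite F"
  shows "f integrable_on (S - F) \<longleftrightarrow> f integrable_on S"
  by (rule integrable_spike_set_eq) (auto intro: negligible_subset[OF negligible_finite[OF assms]])

lemma integral_Diff_finite:
  fixes f :: "real \<Rightarrow> 'a::banach"
  assumes "finite F"
  shows "integral (S - F) f = integral S f"
  by (rule integral_spike_set) (auto intro: negligible_subset[OF negligible_finite[OF assms]])

lemma tendsto_holder_compose:
  fixes g :: "real \<Rightarrow> complex"
  assumes hol: "\<forall>s\<in>A. \<forall>t\<in>A. norm (g s - g t) \<le> C * \<bar>s - t\<bar> powr \<alpha>" and al: "\<alpha> > 0"
    and u: "(u \<longlongrightarrow> u0) F" and ev: "eventually (\<lambda>k. u k \<in> A) F" and u0: "u0 \<in> A"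
  shows "((\<lambda>k. g (u k)) \<longlongrightarrow> g u0) F"
proof -
  have "((\<lambda>k. g (u k) - g u0) \<longlongrightarrow> 0) F"
  proof (rule Lim_null_comparison)
    show "\<forall>\<^sub>F k in F. norm (g (u k) - g u0) \<le> C * \<bar>u k - u0\<bar> powr \<alpha>"
      using ev by eventually_elim (use hol u0 in auto)
    have "((\<lambda>k. C * \<bar>u k - u0\<bar> powr \<alpha>) \<longlongrightarrow> C * \<bar>u0 - u0\<bar> powr \<alpha>) F"
      using al by (intro tendsto_intros u) auto
    then show "((\<lambda>k. C * \<bar>u k - u0\<bar> powr \<alpha>) \<longlongrightarrow> 0) F" by simp
  qed
  then show ?thesis using Lim_null by blast
qed

lemma integral_inverse_horizontal_segment:
  fixes y \<delta> :: real assumes y: "y \<noteq> 0" and d: "\<delta> > 0"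
  shows "integral {-\<delta>..\<delta>} (\<lambda>t. 1 / (of_real t - \<i> * of_real y)) =
         Ln (of_real \<delta> - \<i> * of_real y) - Ln (- of_real \<delta> - \<i> * of_real y)"
proof -
  have "((\<lambda>t. 1 / (of_real t - \<i> * of_real y)) has_integral
        (Ln (of_real \<delta> - \<i> * of_real y) - Ln (of_real (-\<delta>) - \<i> * of_real y))) {-\<delta>..\<delta>}"
  proof (rule fundamental_theorem_of_calculus[where f = "\<lambda>t. Ln (of_real t - \<i> * of_real y)"])
    show "-\<delta> \<le> \<delta>" using d by simp
    fix t assume t: "t \<in> {-\<delta>..\<delta>}"
    have nr: "of_real t - \<i> * of_real y \<notin> \<real>\<^sub>\<le>\<^sub>0" using y by (auto simp: complex_nonpos_Reals_iff)
    have "((\<lambda>w. Ln (w - \<i> * of_real y)) has_field_derivative inverse (of_real t - \<i> * of_real y)) (at (of_real t))"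
      using has_field_derivative_Ln[OF nr] nr by (auto intro!: derivative_eq_intros)
    from has_vector_derivative_real_field[OF this]
    show "((\<lambda>t. Ln (of_real t - \<i> * of_real y)) has_vector_derivative 1 / (of_real t - \<i> * of_real y)) (at t within {-\<delta>..\<delta>})"
      by (simp add: divide_inverse)
  qed
  then show ?thesis by (simp add: integral_unique)
qed

lemma tendsto_Ln_pos_real:
  assumes "(f \<longlongrightarrow> of_real v) F" "v > 0"
  shows "((\<lambda>z. Ln (f z)) \<longlongrightarrow> of_real (ln v)) F"
proof -
  have "of_real v \<notin> \<real>\<^sub>\<le>\<^sub>0" using assms(2) by (auto simp: complex_nonpos_Reals_iff)
  from isCont_tendsto_compose[OF continuous_at_Ln[OF this] assms(1)] assms(2)
  show ?thesis by (simp add: Ln_of_real)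
qed

lemma tendsto_Ln_negative_real_upper:
  assumes f: "((\<lambda>z. - f z) \<longlongrightarrow> of_real q) F" and q: "q > 0" and Im: "\<forall>\<^sub>F z in F. Im (f z) > 0"
  shows "((\<lambda>z. Ln (f z)) \<longlongrightarrow> of_real (ln q) + \<i> * pi) F"
proof -
  have "((\<lambda>z. Ln (- f z) + \<i> * pi) \<longlongrightarrow> of_real (ln q) + \<i> * pi) F"
    by (intro tendsto_intros tendsto_Ln_pos_real f q)
  moreover have "\<forall>\<^sub>F z in F. Ln (- f z) + \<i> * pi = Ln (f z)"
    using Im by eventually_elim (subst (2) minus_minus[symmetric], subst Ln_minus, auto)
  ultimately show ?thesis using tendsto_cong by fastforce
qed

lemma tendsto_Ln_negative_real_lower:
  assumes f: "((\<lambda>z. - f z) \<longlongrightarrow> of_real q) F" and q: "q > 0" and Im: "\<forall>\<^sub>F z in F. Im (f z) < 0"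
  shows "((\<lambda>z. Ln (f z)) \<longlongrightarrow> of_real (ln q) - \<i> * pi) F"
proof -
  have "((\<lambda>z. Ln (- f z) - \<i> * pi) \<longlongrightarrow> of_real (ln q) - \<i> * pi) F"
    by (intro tendsto_intros tendsto_Ln_pos_real f q)
  moreover have "\<forall>\<^sub>F z in F. Ln (- f z) - \<i> * pi = Ln (f z)"
    using Im by eventually_elim (subst (2) minus_minus[symmetric], subst Ln_minus, auto)
  ultimately show ?thesis using tendsto_cong by fastforce
qed

lemma tendsto_Ln_window:
  fixes \<delta> x :: real assumes d: "\<delta> > 0"
  shows "((\<lambda>z. Ln (of_real \<delta> - \<i> * of_real (Im z)) - Ln (- of_real \<delta> - \<i> * of_real (Im z))) \<longlongrightarrow> \<i> * pi)
           (at (of_real x) within {z. Im z > 0})"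
    and "((\<lambda>z. Ln (of_real \<delta> - \<i> * of_real (Im z)) - Ln (- of_real \<delta> - \<i> * of_real (Im z))) \<longlongrightarrow> - \<i> * pi)
           (at (of_real x) within {z. Im z < 0})"
proof -
  have Im: "((\<lambda>z. Im z) \<longlongrightarrow> 0) (at (of_real x) within S)" for S
    using tendsto_Im[OF tendsto_ident_at[of "of_real x" S]] by simp
  have right: "((\<lambda>z. Ln (of_real \<delta> - \<i> * of_real (Im z))) \<longlongrightarrow> of_real (ln \<delta>)) (at (of_real x) within S)" for S
    using Im[of S] d by (intro tendsto_Ln_pos_real) (auto intro!: tendsto_eq_intros)
  have left: "((\<lambda>z. - (- of_real \<delta> - \<i> * of_real (Im z))) \<longlongrightarrow> of_real \<delta>) (at (of_real x) within S)" for S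
    using Im[of S] by (auto intro!: tendsto_eq_intros)
  have "((\<lambda>z. Ln (- of_real \<delta> - \<i> * of_real (Im z))) \<longlongrightarrow> of_real (ln \<delta>) - \<i> * pi) (at (of_real x) within {z. Im z > 0})"
    using left d by (rule tendsto_Ln_negative_real_lower) (simp add: eventually_at_filter)
  from tendsto_diff[OF right this] show "((\<lambda>z. Ln (of_real \<delta> - \<i> * of_real (Im z)) - Ln (- of_real \<delta> - \<i> * of_real (Im z))) \<longlongrightarrow> \<i> * pi)
      (at (of_real x) within {z. Im z > 0})" by simp
  have "((\<lambda>z. Ln (- of_real \<delta> - \<i> * of_real (Im z))) \<longlongrightarrow> of_real (ln \<delta>) + \<i> * pi) (at (of_real x) within {z. Im z < 0})"
    using left d by (rule tendsto_Ln_negative_real_upper) (simp add: eventually_at_filter)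
  from tendsto_diff[OF right this] show "((\<lambda>z. Ln (of_real \<delta> - \<i> * of_real (Im z)) - Ln (- of_real \<delta> - \<i> * of_real (Im z))) \<longlongrightarrow> - \<i> * pi)
      (at (of_real x) within {z. Im z < 0})" by simp
qed

lemma holder_continuous_on:
  fixes g :: "real \<Rightarrow> complex"
  assumes hol: "\<forall>s\<in>A. \<forall>t\<in>A. norm (g s - g t) \<le> C * \<bar>s - t\<bar> powr \<alpha>" and al: "\<alpha> > 0"
  shows "continuous_on A g"
  unfolding continuous_on_def
proof
  fix x assume x: "x \<in> A"
  have ev: "\<forall>\<^sub>F y in at x within A. y \<in> A" by (simp add: eventually_at_filter)
  show "(g \<longlongrightarrow> g x) (at x within A)"
    using tendsto_holder_compose[OF hol al tendsto_ident_at ev x] by simp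
qed

lemma eventually_Re_near:
  fixes x :: real and \<delta> :: real assumes "\<delta> > 0"
  shows "\<forall>\<^sub>F z in at (of_real x) within S. \<bar>Re z - x\<bar> < \<delta>"
  unfolding eventually_at
proof (intro exI[of _ \<delta>] conjI ballI impI)
  show "0 < \<delta>" by fact
  fix z assume "z \<in> S" "z \<noteq> of_real x \<and> dist z (of_real x) < \<delta>"
  then have "norm (z - of_real x) < \<delta>" by (simp add: dist_norm)
  moreover have "\<bar>Re (z - of_real x)\<bar> \<le> norm (z - of_real x)" by (rule abs_Re_le_cmod)
  ultimately show "\<bar>Re z - x\<bar> < \<delta>" by simp
qed

lemma integral_split_subinterval:
  fixes f :: "real \<Rightarrow> 'a::banach"
  assumes f: "f integrable_on {a..b}" and cd: "{c..d} \<subseteq> {a..b}"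
  shows "integral {a..b} f = integral {a..b} (\<lambda>s. if s \<in> {c..d} then 0 else f s) + integral {c..d} f"
proof -
  have fW: "f integrable_on {c..d}" by (rule integrable_on_subinterval[OF f cd])
  have cdI: "{c..d} \<inter> {a..b} = {c..d}" using cd by blast
  have "(\<lambda>s. if s \<in> {c..d} then f s else 0) integrable_on {a..b}"
    by (metis integrable_restrict_Int cdI fW)
  moreover have "integral {a..b} (\<lambda>s. if s \<in> {c..d} then f s else 0) = integral {c..d} f"
    by (metis Henstock_Kurzweil_Integration.integral_restrict_Int cdI)
  ultimately have "integral {a..b} (\<lambda>s. f s - (if s \<in> {c..d} then f s else 0)) = integral {a..b} f - integral {c..d} f"
    using integral_diff[OF f] by simp
  moreover have "(\<lambda>s. f s - (if s \<in> {c..d} then f s else 0)) = (\<lambda>s. if s \<in> {c..d} then 0 else f s)"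
    by auto
  ultimately show ?thesis by (simp add: algebra_simps)
qed

lemma integral_inverse_window:
  assumes z: "Im z \<noteq> 0" and d: "\<delta> > 0"
  shows "integral {Re z - \<delta>..Re z + \<delta>} (\<lambda>s. 1 / (of_real s - z)) =
    Ln (of_real \<delta> - \<i> * of_real (Im z)) - Ln (- of_real \<delta> - \<i> * of_real (Im z))"
proof -
  have shifted_denominator: "of_real t + of_real (Re z) - z = of_real t - \<i> * of_real (Im z)" for t
    by (simp add: complex_eq_iff)
  have "integral {Re z - \<delta>..Re z + \<delta>} (\<lambda>s. 1 / (of_real s - z)) =
      integral {(Re z - \<delta>) - Re z..(Re z + \<delta>) - Re z} (\<lambda>t. 1 / (of_real (t + Re z) - z))"
    by (rule integral_shift_real_ivl[symmetric])
  also have "\<dots> = integral {-\<delta>..\<delta>} (\<lambda>t. 1 / (of_real t - \<i> * of_real (Im z)))"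
    by (simp add: shifted_denominator)
  also have "\<dots> = Ln (of_real \<delta> - \<i> * of_real (Im z)) - Ln (- of_real \<delta> - \<i> * of_real (Im z))"
    by (rule integral_inverse_horizontal_segment[OF z d])
  finally show ?thesis .
qed

lemma cauchy_transform_split:
  fixes g :: "real \<Rightarrow> complex" and a b x \<delta> :: real and z :: complex
  assumes g: "g absolutely_integrable_on {a..b}"
    and d: "\<delta> > 0" and sub: "{x - 2*\<delta> .. x + 2*\<delta>} \<subseteq> {a..b}"
    and zi: "Im z \<noteq> 0" and zx: "\<bar>Re z - x\<bar> < \<delta>"
  shows "cauchy_transform a b g z =
    integral {a..b} (\<lambda>s. if \<delta> < \<bar>s - Re z\<bar> then g s / (of_real s - z) else 0)
  + integral {-\<delta>..\<delta>} (\<lambda>t. (g (Re z + t) - g (Re z)) / (of_real t - \<i> * of_real (Im z)))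
  + g (Re z) * (Ln (of_real \<delta> - \<i> * of_real (Im z)) - Ln (- of_real \<delta> - \<i> * of_real (Im z)))"
proof -
  define f where "f = (\<lambda>s. g s / (of_real s - z))"
  define W where "W = {Re z - \<delta> .. Re z + \<delta>}"
  have shifted_denominator: "of_real t + of_real (Re z) - z = of_real t - \<i> * of_real (Im z)" for t
    by (simp add: complex_eq_iff)
  have "z \<notin> of_real ` {a..b}" using zi by auto
  then have fi: "f integrable_on {a..b}"
    unfolding f_def using absolutely_integrable_cauchy_kernel[OF g] set_lebesgue_integral_eq_integral(1) by blast
  have WS: "W \<subseteq> {a..b}" using sub zx d unfolding W_def by auto
  have "cauchy_transform a b g z = integral {a..b} (\<lambda>s. if s \<in> W then 0 else f s) + integral W f"
    unfolding cauchy_transform_def f_def[symmetric] W_def by (rule integral_split_subinterval[OF fi WS[unfolded W_def]])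
  also have "(\<lambda>s. if s \<in> W then 0 else f s) = (\<lambda>s. if \<delta> < \<bar>s - Re z\<bar> then g s / (of_real s - z) else 0)"
    unfolding W_def f_def by (rule ext) auto
  also have "integral W f = integral W (\<lambda>s. f s - g (Re z) * (1 / (of_real s - z))) + g (Re z) * integral W (\<lambda>s. 1 / (of_real s - z))"
  proof -
    have "(\<lambda>s. 1 / (of_real s - z)) integrable_on W"
      unfolding W_def using zi by (intro integrable_continuous_interval continuous_intros) (auto simp: complex_eq_iff)
    moreover have "f integrable_on W" unfolding W_def by (rule integrable_on_subinterval[OF fi WS[unfolded W_def]])
    ultimately have "integral W (\<lambda>s. f s - g (Re z) * (1 / (of_real s - z))) =
        integral W f - g (Re z) * integral W (\<lambda>s. 1 / (of_real s - z))"
      by (simp only: integral_diff integrable_on_mult_right integral_mult_right)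
    then show ?thesis by (metis diff_add_cancel)
  qed
  also have "integral W (\<lambda>s. f s - g (Re z) * (1 / (of_real s - z))) =
      integral {-\<delta>..\<delta>} (\<lambda>t. (g (Re z + t) - g (Re z)) / (of_real t - \<i> * of_real (Im z)))"
  proof -
    have "integral W (\<lambda>s. f s - g (Re z) * (1 / (of_real s - z))) =
        integral {(Re z - \<delta>) - Re z .. (Re z + \<delta>) - Re z} (\<lambda>t. f (t + Re z) - g (Re z) * (1 / (of_real (t + Re z) - z)))"
      unfolding W_def by (rule integral_shift_real_ivl[symmetric])
    also have "\<dots> = integral {-\<delta>..\<delta>} (\<lambda>t. (g (Re z + t) - g (Re z)) / (of_real t - \<i> * of_real (Im z)))"
      by (simp add: f_def shifted_denominator diff_divide_distrib add.commute)
    finally show ?thesis .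
  qed
  finally show ?thesis unfolding W_def integral_inverse_window[OF zi d] by (simp add: algebra_simps)
qed

lemma integrable_cauchy_kernel_outer:
  fixes g :: "real \<Rightarrow> complex"
  assumes g: "g absolutely_integrable_on {a..b}" and zi: "Im z \<noteq> 0"
  shows "(\<lambda>s. if \<delta> < \<bar>s - Re z\<bar> then g s / (of_real s - z) else 0) integrable_on {a..b}"
proof -
  have zK: "z \<notin> of_real ` {a..b}" using zi by auto
  define F where "F = (\<lambda>s. g s / (of_real s - z))"
  have Fi: "F integrable_on {a..b}"
    unfolding F_def using absolutely_integrable_cauchy_kernel[OF g zK] set_lebesgue_integral_eq_integral(1) by blast
  define W where "W = {Re z - \<delta> .. Re z + \<delta>}"
  have WI: "W \<inter> {a..b} = {max (Re z - \<delta>) a .. min (Re z + \<delta>) b}" unfolding W_def by auto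
  have "F integrable_on W \<inter> {a..b}" unfolding WI by (rule integrable_on_subinterval[OF Fi]) auto
  then have hW: "(\<lambda>s. if s \<in> W then F s else 0) integrable_on {a..b}"
    using integrable_restrict_Int[of W F "{a..b}"] by simp
  have "(\<lambda>s. F s - (if s \<in> W then F s else 0)) integrable_on {a..b}"
    by (rule integrable_diff[OF Fi hW])
  then show ?thesis
    by (rule integrable_eq) (auto simp: W_def F_def)
qed

lemma tendsto_truncated_kernel:
  assumes X: "(X \<longlongrightarrow> of_real x) F" and s: "\<bar>s - x\<bar> \<noteq> \<delta>" and d: "\<delta> > 0"
  shows "((\<lambda>k. if \<delta> < \<bar>s - Re (X k)\<bar> then c / (of_real s - X k) else 0) \<longlongrightarrow>
    (if \<delta> < \<bar>s - x\<bar> then c / (of_real s - of_real x) else 0)) F"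
proof -
  have dist_lim: "((\<lambda>k. \<bar>s - Re (X k)\<bar>) \<longlongrightarrow> \<bar>s - x\<bar>) F"
    using tendsto_Re[OF X] by (intro tendsto_intros) simp
  show ?thesis
  proof (cases "\<delta> < \<bar>s - x\<bar>")
    case True
    have "of_real s - of_real x \<noteq> (0::complex)" using True d by auto
    then have "((\<lambda>k. c / (of_real s - X k)) \<longlongrightarrow> c / (of_real s - of_real x)) F"
      by (intro tendsto_intros X)
    moreover have "\<forall>\<^sub>F k in F. c / (of_real s - X k) = (if \<delta> < \<bar>s - Re (X k)\<bar> then c / (of_real s - X k) else 0)"
      using order_tendstoD(1)[OF dist_lim True] by eventually_elim simp
    ultimately show ?thesis using True tendsto_cong by fastforce
  next
    case False
    then have "\<bar>s - x\<bar> < \<delta>" using s by simp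
    from order_tendstoD(2)[OF dist_lim this]
    have "\<forall>\<^sub>F k in F. (if \<delta> < \<bar>s - Re (X k)\<bar> then c / (of_real s - X k) else 0) = 0"
      by eventually_elim simp
    then show ?thesis using False by (simp add: tendsto_eventually)
  qed
qed

lemma tendsto_cauchy_transform_outer:
  fixes g :: "real \<Rightarrow> complex" and a b x \<delta> :: real
  assumes g: "g absolutely_integrable_on {a..b}" and d: "\<delta> > 0"
  shows "((\<lambda>z. integral {a..b} (\<lambda>s. if \<delta> < \<bar>s - Re z\<bar> then g s / (of_real s - z) else 0)) \<longlongrightarrow>
          integral {a..b} (\<lambda>s. if \<delta> < \<bar>s - x\<bar> then g s / (of_real s - of_real x) else 0))
          (at (of_real x) within {z. Im z \<noteq> 0})"
  unfolding tendsto_at_iff_sequentially comp_def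
proof (intro allI impI)
  fix X :: "nat \<Rightarrow> complex"
  assume X: "\<forall>i. X i \<in> {z. Im z \<noteq> 0} - {of_real x}" and Xl: "X \<longlonglongrightarrow> of_real x"
  define S' where "S' = {a..b} - {x - \<delta>, x + \<delta>}"
  define fk where "fk = (\<lambda>k s. if \<delta> < \<bar>s - Re (X k)\<bar> then g s / (of_real s - X k) else 0)"
  define f0 where "f0 = (\<lambda>s. if \<delta> < \<bar>s - x\<bar> then g s / (of_real s - of_real x) else 0)"
  have ng: "(\<lambda>s. norm (g s)) integrable_on {a..b}"
    using g absolutely_integrable_on_def by blast
  have fin: "finite {x - \<delta>, x + \<delta>}" by simp
  have "(\<lambda>k. integral S' (fk k)) \<longlonglongrightarrow> integral S' f0"
  proof (rule dominated_convergence(2))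
    show "fk k integrable_on S'" for k
      unfolding S'_def fk_def integrable_on_Diff_finite_iff[OF fin]
      by (rule integrable_cauchy_kernel_outer[OF g]) (use X in auto)
    show "(\<lambda>s. norm (g s) / \<delta>) integrable_on S'"
      unfolding S'_def integrable_on_Diff_finite_iff[OF fin] by (rule integrable_on_divide[OF ng])
    show "norm (fk k s) \<le> norm (g s) / \<delta>" if "s \<in> S'" for k s
    proof (cases "\<delta> < \<bar>s - Re (X k)\<bar>")
      case True
      have "\<bar>s - Re (X k)\<bar> \<le> norm (of_real s - X k)"
        using abs_Re_le_cmod[of "of_real s - X k"] by simp
      then have le: "\<delta> \<le> norm (of_real s - X k)" using True by simp
      have "norm (fk k s) = norm (g s) / norm (of_real s - X k)"
        using True by (simp add: fk_def norm_divide)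
      also have "\<dots> \<le> norm (g s) / \<delta>" using le d by (intro divide_left_mono mult_pos_pos) auto
      finally show ?thesis .
    next
      case False then show ?thesis using d by (simp add: fk_def)
    qed
    show "(\<lambda>k. fk k s) \<longlonglongrightarrow> f0 s" if "s \<in> S'" for s
      unfolding fk_def f0_def by (rule tendsto_truncated_kernel[OF Xl]) (use that d in \<open>auto simp: S'_def\<close>)
  qed
  then show "(\<lambda>k. integral {a..b} (\<lambda>s. if \<delta> < \<bar>s - Re (X k)\<bar> then g s / (of_real s - X k) else 0)) \<longlonglongrightarrow>
          integral {a..b} (\<lambda>s. if \<delta> < \<bar>s - x\<bar> then g s / (of_real s - of_real x) else 0)"
    unfolding S'_def integral_Diff_finite[OF fin] fk_def f0_def .
qed

lemma norm_divide_horizontal_le: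
  fixes w :: complex and t y C \<alpha> :: real
  assumes "norm w \<le> C * \<bar>t\<bar> powr \<alpha>" and "t \<noteq> 0"
  shows "norm (w / (of_real t - \<i> * of_real y)) \<le> C * \<bar>t\<bar> powr (\<alpha> - 1)"
proof -
  have "\<bar>t\<bar> \<le> norm (of_real t - \<i> * of_real y)"
    using abs_Re_le_cmod[of "of_real t - \<i> * of_real y"] by simp
  then have "norm (w / (of_real t - \<i> * of_real y)) \<le> C * \<bar>t\<bar> powr \<alpha> / \<bar>t\<bar>"
    unfolding norm_divide using assms by (intro frac_le) (auto intro: order_trans[OF norm_ge_zero])
  also have "\<dots> = C * \<bar>t\<bar> powr (\<alpha> - 1)"
    using assms(2) by (simp add: powr_diff)
  finally show ?thesis .
qed

lemma tendsto_holder_quotient_integral_sequentially: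
  fixes g :: "real \<Rightarrow> complex" and Y :: "nat \<Rightarrow> complex"
  assumes d: "\<delta> > 0"
    and hol: "\<forall>s\<in>{x-2*\<delta>..x+2*\<delta>}. \<forall>t\<in>{x-2*\<delta>..x+2*\<delta>}. norm (g s - g t) \<le> C * \<bar>s - t\<bar> powr \<alpha>"
    and al: "\<alpha> > 0" and C: "C \<ge> 0"
    and Y: "Y \<longlonglongrightarrow> of_real x" "\<And>k. Im (Y k) \<noteq> 0" "\<And>k. \<bar>Re (Y k) - x\<bar> < \<delta>"
  shows "(\<lambda>k. integral {-\<delta>..\<delta>} (\<lambda>t. (g (Re (Y k) + t) - g (Re (Y k))) / (of_real t - \<i> * of_real (Im (Y k)))))
    \<longlonglongrightarrow> integral {-\<delta>..\<delta>} (\<lambda>t. (g (x + t) - g x) / of_real t)"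
proof (rule dominated_convergence(2))
  define A where "A = {x-2*\<delta>..x+2*\<delta>}"
  have hol': "\<forall>s\<in>A. \<forall>t\<in>A. norm (g s - g t) \<le> C * \<bar>s - t\<bar> powr \<alpha>" using hol A_def by simp
  have inA: "Re (Y k) + t \<in> A" "Re (Y k) \<in> A" if "t \<in> {-\<delta>..\<delta>}" for k t
    using Y(3)[of k] that unfolding A_def by auto
  have ReY: "(\<lambda>k. Re (Y k)) \<longlonglongrightarrow> x" using tendsto_Re[OF Y(1)] by simp
  have ImY: "(\<lambda>k. Im (Y k)) \<longlonglongrightarrow> 0" using tendsto_Im[OF Y(1)] by simp
  show "(\<lambda>t. (g (Re (Y k) + t) - g (Re (Y k))) / (of_real t - \<i> * of_real (Im (Y k)))) integrable_on {-\<delta>..\<delta>}" for k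
  proof (rule integrable_continuous_interval)
    have "(\<lambda>t. Re (Y k) + t) ` {-\<delta>..\<delta>} \<subseteq> A" using Y(3)[of k] unfolding A_def by auto
    then have "continuous_on {-\<delta>..\<delta>} (\<lambda>t. g (Re (Y k) + t))"
      by (intro continuous_on_compose2[OF holder_continuous_on[OF hol' al]] continuous_intros)
    moreover have "of_real t - \<i> * of_real (Im (Y k)) \<noteq> 0" for t using Y(2)[of k] by (auto simp: complex_eq_iff)
    ultimately show "continuous_on {-\<delta>..\<delta>} (\<lambda>t. (g (Re (Y k) + t) - g (Re (Y k))) / (of_real t - \<i> * of_real (Im (Y k))))"
      by (intro continuous_intros) auto
  qed
  show "(\<lambda>t. C * \<bar>t\<bar> powr (\<alpha> - 1)) integrable_on {-\<delta>..\<delta>}"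
    by (intro integrable_on_mult_right integrable_abs_powr_symmetric) (use d al in auto)
  show "norm ((g (Re (Y k) + t) - g (Re (Y k))) / (of_real t - \<i> * of_real (Im (Y k)))) \<le> C * \<bar>t\<bar> powr (\<alpha> - 1)"
    if t: "t \<in> {-\<delta>..\<delta>}" for k t
  proof (cases "t = 0")
    case False
    have "norm (g (Re (Y k) + t) - g (Re (Y k))) \<le> C * \<bar>t\<bar> powr \<alpha>" using hol' inA[OF t, of k] by force
    then show ?thesis using False by (rule norm_divide_horizontal_le)
  qed simp
  show "(\<lambda>k. (g (Re (Y k) + t) - g (Re (Y k))) / (of_real t - \<i> * of_real (Im (Y k)))) \<longlonglongrightarrow> (g (x + t) - g x) / of_real t"
    if t: "t \<in> {-\<delta>..\<delta>}" for t
  proof (cases "t = 0")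
    case False
    have xt: "x + t \<in> A" "x \<in> A" using t d unfolding A_def by auto
    have "(\<lambda>k. g (Re (Y k) + t)) \<longlonglongrightarrow> g (x + t)"
      by (rule tendsto_holder_compose[OF hol' al _ _ xt(1)]) (use inA t in \<open>auto intro!: tendsto_intros ReY\<close>)
    moreover have "(\<lambda>k. g (Re (Y k))) \<longlonglongrightarrow> g x"
      by (rule tendsto_holder_compose[OF hol' al ReY _ xt(2)]) (use inA t in auto)
    ultimately have "(\<lambda>k. (g (Re (Y k) + t) - g (Re (Y k))) / (of_real t - \<i> * of_real (Im (Y k)))) \<longlonglongrightarrow>
        (g (x + t) - g x) / (of_real t - \<i> * of_real 0)"
      using False by (intro tendsto_intros ImY) (simp_all add: complex_eq_iff)
    then show ?thesis by simp
  qed simp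
qed

lemma tendsto_cauchy_transform_inner:
  fixes g :: "real \<Rightarrow> complex" and x \<delta> C \<alpha> :: real
  assumes d: "\<delta> > 0"
    and hol: "\<forall>s\<in>{x-2*\<delta>..x+2*\<delta>}. \<forall>t\<in>{x-2*\<delta>..x+2*\<delta>}. norm (g s - g t) \<le> C * \<bar>s - t\<bar> powr \<alpha>"
    and al: "\<alpha> > 0" and C: "C \<ge> 0"
  shows "((\<lambda>z. integral {-\<delta>..\<delta>} (\<lambda>t. (g (Re z + t) - g (Re z)) / (of_real t - \<i> * of_real (Im z)))) \<longlongrightarrow>
         integral {-\<delta>..\<delta>} (\<lambda>t. (g (x + t) - g x) / of_real t)) (at (of_real x) within {z. Im z \<noteq> 0})"
  unfolding tendsto_at_iff_sequentially comp_def
proof (intro allI impI)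
  fix X :: "nat \<Rightarrow> complex"
  assume X: "\<forall>i. X i \<in> {z. Im z \<noteq> 0} - {of_real x}" and Xl: "X \<longlonglongrightarrow> of_real x"
  have "(\<lambda>k. \<bar>Re (X k) - x\<bar>) \<longlonglongrightarrow> \<bar>Re (of_real x) - x\<bar>" by (intro tendsto_intros Xl)
  then have "\<forall>\<^sub>F k in sequentially. \<bar>Re (X k) - x\<bar> < \<delta>" using d by (intro order_tendstoD(2)) auto
  then obtain N where N: "\<And>k. k \<ge> N \<Longrightarrow> \<bar>Re (X k) - x\<bar> < \<delta>" unfolding eventually_sequentially by blast
  have "(\<lambda>k. integral {-\<delta>..\<delta>} (\<lambda>t. (g (Re (X (k + N)) + t) - g (Re (X (k + N)))) / (of_real t - \<i> * of_real (Im (X (k + N))))))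
      \<longlonglongrightarrow> integral {-\<delta>..\<delta>} (\<lambda>t. (g (x + t) - g x) / of_real t)"
    using X by (intro tendsto_holder_quotient_integral_sequentially[OF d hol al C]
        LIMSEQ_ignore_initial_segment[OF Xl] N) auto
  then show "(\<lambda>k. integral {-\<delta>..\<delta>} (\<lambda>t. (g (Re (X k) + t) - g (Re (X k))) / (of_real t - \<i> * of_real (Im (X k))))) \<longlonglongrightarrow>
         integral {-\<delta>..\<delta>} (\<lambda>t. (g (x + t) - g x) / of_real t)"
    by (rule LIMSEQ_offset)
qed

text \<open>Near \<open>x\<close> the transform splits into an outer integral over \<open>|s - Re z| > \<delta>\<close>, an inner integral
  of the Holder difference quotient, and \<open>g (Re z)\<close> times an explicit logarithm; the first two are
  continuous up to the real axis, while the logarithm tends to \<open>\<plusminus>\<i>\<pi>\<close> from above and below.\<close>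

lemma plemelj_sokhotski:
  fixes g :: "real \<Rightarrow> complex" and a b x \<delta> C \<alpha> :: real
  assumes g: "g absolutely_integrable_on {a..b}"
    and d: "\<delta> > 0" and sub: "{x - 2*\<delta> .. x + 2*\<delta>} \<subseteq> {a..b}"
    and hol: "\<forall>s\<in>{x-2*\<delta>..x+2*\<delta>}. \<forall>t\<in>{x-2*\<delta>..x+2*\<delta>}. norm (g s - g t) \<le> C * \<bar>s - t\<bar> powr \<alpha>"
    and al: "\<alpha> > 0" and C: "C \<ge> 0"
  shows "\<exists>P. (cauchy_transform a b g \<longlongrightarrow> P + \<i> * pi * g x) (at (of_real x) within {z. Im z > 0}) \<and>
             (cauchy_transform a b g \<longlongrightarrow> P - \<i> * pi * g x) (at (of_real x) within {z. Im z < 0})"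
proof -
  define outer where "outer = (\<lambda>z. integral {a..b} (\<lambda>s. if \<delta> < \<bar>s - Re z\<bar> then g s / (of_real s - z) else 0))"
  define inner where "inner = (\<lambda>z. integral {-\<delta>..\<delta>} (\<lambda>t. (g (Re z + t) - g (Re z)) / (of_real t - \<i> * of_real (Im z))))"
  define window where "window = (\<lambda>z. Ln (of_real \<delta> - \<i> * of_real (Im z)) - Ln (- of_real \<delta> - \<i> * of_real (Im z)))"
  define outer0 where "outer0 = integral {a..b} (\<lambda>s. if \<delta> < \<bar>s - x\<bar> then g s / (of_real s - of_real x) else 0)"
  define inner0 where "inner0 = integral {-\<delta>..\<delta>} (\<lambda>t. (g (x + t) - g x) / of_real t)"
  define A where "A = {x-2*\<delta>..x+2*\<delta>}"
  have hol': "\<forall>s\<in>A. \<forall>t\<in>A. norm (g s - g t) \<le> C * \<bar>s - t\<bar> powr \<alpha>" using hol A_def by simp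
  have xA: "x \<in> A" using d A_def by simp
  have dec: "cauchy_transform a b g z = outer z + inner z + g (Re z) * window z" if "Im z \<noteq> 0" "\<bar>Re z - x\<bar> < \<delta>" for z
    unfolding outer_def inner_def window_def by (rule cauchy_transform_split[OF g d sub that])
  have outer_lim: "(outer \<longlongrightarrow> outer0) (at (of_real x) within {z. Im z \<noteq> 0})"
    unfolding outer_def outer0_def by (rule tendsto_cauchy_transform_outer[OF g d])
  have inner_lim: "(inner \<longlongrightarrow> inner0) (at (of_real x) within {z. Im z \<noteq> 0})"
    unfolding inner_def inner0_def by (rule tendsto_cauchy_transform_inner[OF d hol al C])
  have g_lim: "((\<lambda>z. g (Re z)) \<longlongrightarrow> g x) (at (of_real x) within S)" for S
  proof (rule tendsto_holder_compose[OF hol' al _ _ xA])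
    show "((\<lambda>z. Re z) \<longlongrightarrow> x) (at (of_real x) within S)"
      using tendsto_Re[OF tendsto_ident_at[of "of_real x" S]] by simp
    show "\<forall>\<^sub>F z in at (of_real x) within S. Re z \<in> A"
      using eventually_Re_near[OF d, of x S] by eventually_elim (auto simp: A_def)
  qed
  have main: "(cauchy_transform a b g \<longlongrightarrow> outer0 + inner0 + g x * L) (at (of_real x) within S)"
    if S: "S \<subseteq> {z. Im z \<noteq> 0}" and window_lim: "(window \<longlongrightarrow> L) (at (of_real x) within S)" for S L
  proof -
    have "((\<lambda>z. outer z + inner z + g (Re z) * window z) \<longlongrightarrow> outer0 + inner0 + g x * L) (at (of_real x) within S)"
      by (intro tendsto_intros g_lim window_lim tendsto_within_subset[OF outer_lim S] tendsto_within_subset[OF inner_lim S])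
    moreover have "\<forall>\<^sub>F z in at (of_real x) within S. outer z + inner z + g (Re z) * window z = cauchy_transform a b g z"
    proof -
      have "\<forall>\<^sub>F z in at (of_real x) within S. z \<in> S" by (simp add: eventually_at_filter)
      then show ?thesis using eventually_Re_near[OF d, of x S] by eventually_elim (use S dec in auto)
    qed
    ultimately show ?thesis using tendsto_cong by fastforce
  qed
  have up: "(cauchy_transform a b g \<longlongrightarrow> outer0 + inner0 + g x * (\<i> * pi)) (at (of_real x) within {z. Im z > 0})"
    by (rule main) (auto simp: window_def intro: tendsto_Ln_window(1)[OF d])
  have lo: "(cauchy_transform a b g \<longlongrightarrow> outer0 + inner0 + g x * (- \<i> * pi)) (at (of_real x) within {z. Im z < 0})"
    by (rule main) (use tendsto_Ln_window(2)[OF d, of x] in \<open>auto simp: window_def\<close>)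
  show ?thesis
    by (rule exI[of _ "outer0 + inner0"]) (use up lo in \<open>simp add: algebra_simps\<close>)
qed

section \<open>Branches near the real axis\<close>

lemma Im_mobius: "Im ((z - of_real p) / (z - of_real q)) = (p - q) * Im z / (cmod (z - of_real q))\<^sup>2"
  by (simp add: Im_divide cmod_power2 algebra_simps diff_divide_distrib)

lemma Im_csqrt_pos: "Im z > 0 \<Longrightarrow> Im (csqrt z) > 0"
proof -
  assume z: "Im z > 0"
  have "Im (csqrt z) \<noteq> 0" using z Im_csqrt_eq_0_iff[of z] by (auto simp: complex_nonneg_Reals_iff)
  moreover have "Im (csqrt z) = sgn (Im z) * sqrt ((cmod z - Re z) / 2)" using z by simp
  moreover have "sqrt ((cmod z - Re z) / 2) \<ge> 0" using complex_Re_le_cmod[of z] by simp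
  ultimately show ?thesis using z by (auto simp: sgn_if)
qed

lemma Im_csqrt_neg: "Im z < 0 \<Longrightarrow> Im (csqrt z) < 0"
proof -
  assume z: "Im z < 0"
  have "Im (csqrt z) \<noteq> 0" using z Im_csqrt_eq_0_iff[of z] by (auto simp: complex_nonneg_Reals_iff)
  moreover have "Im (csqrt z) = sgn (Im z) * sqrt ((cmod z - Re z) / 2)" using z by simp
  moreover have "sqrt ((cmod z - Re z) / 2) \<ge> 0" using complex_Re_le_cmod[of z] by simp
  ultimately show ?thesis using z by (auto simp: sgn_if)
qed

lemma csqrt_lower_half_plane: "Im w < 0 \<Longrightarrow> csqrt w = - \<i> * csqrt (- w)"
proof -
  assume w: "Im w < 0"
  have "Im (csqrt (- w)) > 0" using w by (intro Im_csqrt_pos) simp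
  moreover have "(- \<i> * csqrt (- w))\<^sup>2 = w" by (simp add: power_mult_distrib)
  ultimately show ?thesis by (intro csqrt_unique) auto
qed

lemma csqrt_upper_half_plane: "Im w > 0 \<Longrightarrow> csqrt w = \<i> * csqrt (- w)"
proof -
  assume w: "Im w > 0"
  have "Im (csqrt (- w)) < 0" using w by (intro Im_csqrt_neg) simp
  moreover have "(\<i> * csqrt (- w))\<^sup>2 = w" by (simp add: power_mult_distrib)
  ultimately show ?thesis by (intro csqrt_unique) auto
qed

lemma islimpt_upper_half_plane: "of_real x islimpt {z. Im z > 0}"
  unfolding islimpt_approachable
proof (intro allI impI)
  fix e :: real assume e: "e > 0"
  show "\<exists>x'\<in>{z. Im z > 0}. x' \<noteq> of_real x \<and> dist x' (of_real x) < e"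
    by (rule bexI[of _ "of_real x + \<i> * of_real (e/2)"]) (use e in \<open>auto simp: dist_norm norm_mult\<close>)
qed

lemma islimpt_lower_half_plane: "of_real x islimpt {z. Im z < 0}"
  unfolding islimpt_approachable
proof (intro allI impI)
  fix e :: real assume e: "e > 0"
  show "\<exists>x'\<in>{z. Im z < 0}. x' \<noteq> of_real x \<and> dist x' (of_real x) < e"
    by (rule bexI[of _ "of_real x - \<i> * of_real (e/2)"]) (use e in \<open>auto simp: dist_norm norm_mult\<close>)
qed

lemma nontrivial_upper_half_plane: "\<not> trivial_limit (at (of_real x) within {z. Im z > 0})"
  using islimpt_upper_half_plane trivial_limit_within by blast
lemma nontrivial_lower_half_plane: "\<not> trivial_limit (at (of_real x) within {z. Im z < 0})"
  using islimpt_lower_half_plane trivial_limit_within by blast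

lemma eventually_at_within_mem: "\<forall>\<^sub>F z in at (y::complex) within S. z \<in> S"
  by (simp add: eventually_at_filter)

lemma eventually_at_within_neq: "\<forall>\<^sub>F z in at y within S. z \<noteq> c" if "c \<noteq> y" for c y :: complex
proof -
  have "\<forall>\<^sub>F z in nhds y. z \<noteq> c" using that by (intro t1_space_nhds) auto
  then show ?thesis unfolding eventually_at_filter by (auto elim: eventually_mono)
qed

lemma exp_i_pi_half: "exp (\<i> * of_real (pi/2)) = \<i>" by (simp add: complex_eq_iff Re_exp Im_exp)
lemma exp_i_pi_half': "exp (\<i> * of_real pi / 2) = \<i>" by (simp add: complex_eq_iff Re_exp Im_exp)

lemma rfun_eq: "z \<noteq> of_real b \<Longrightarrow> rfun a b z = csqrt ((z - of_real a) / (z - of_real b))"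
  unfolding rfun_def sqrtR_def by simp

lemma gam_eq: "z \<noteq> of_real b \<Longrightarrow> z \<noteq> of_real a \<Longrightarrow> gam a b z = exp (1/4 * Ln ((z - of_real b) / (z - of_real a)))"
  unfolding gam_def powr_def by (auto simp: divide_eq_0_iff)

lemma tendsto_mobius_real:
  fixes p q y :: real
  assumes "y \<noteq> q"
  shows "((\<lambda>z::complex. (z - of_real p) / (z - of_real q)) \<longlongrightarrow> of_real ((y - p) / (y - q))) (at (of_real y) within S)"
proof -
  have "((\<lambda>z::complex. (z - of_real p) / (z - of_real q)) \<longlongrightarrow> (of_real y - of_real p) / (of_real y - of_real q)) (at (of_real y) within S)"
    using assms by (intro tendsto_intros) auto
  then show ?thesis by simp
qed

lemma tendsto_neg_mobius_real:
  fixes p q y :: real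
  assumes "y \<noteq> q"
  shows "((\<lambda>z::complex. - ((z - of_real p) / (z - of_real q))) \<longlongrightarrow> of_real ((y - p) / (q - y))) (at (of_real y) within S)"
proof -
  have "((\<lambda>z::complex. - ((z - of_real p) / (z - of_real q))) \<longlongrightarrow> - of_real ((y - p) / (y - q))) (at (of_real y) within S)"
    by (intro tendsto_intros tendsto_mobius_real assms)
  moreover have "- ((y - p) / (y - q)) = (y - p) / (q - y)" using assms by (simp add: field_simps)
  ultimately show ?thesis by (metis of_real_minus)
qed

lemma tendsto_csqrt_pos_real:
  assumes "(f \<longlongrightarrow> of_real v) F" "v > 0"
  shows "((\<lambda>z. csqrt (f z)) \<longlongrightarrow> of_real (sqrt v)) F"
proof -
  have "of_real v \<notin> \<real>\<^sub>\<le>\<^sub>0" using assms(2) by (auto simp: complex_nonpos_Reals_iff)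
  from isCont_tendsto_compose[OF continuous_at_csqrt[OF this] assms(1)] assms(2)
  show ?thesis by simp
qed

lemma Im_mobius_upper_neg: "p < q \<Longrightarrow> Im z > 0 \<Longrightarrow> Im ((z - of_real p) / (z - of_real q)) < 0"
  by (simp add: Im_mobius divide_neg_pos mult_neg_pos zero_less_power2 complex_eq_iff)

lemma Im_mobius_lower_pos: "p < q \<Longrightarrow> Im z < 0 \<Longrightarrow> Im ((z - of_real p) / (z - of_real q)) > 0"
  by (simp add: Im_mobius divide_pos_pos mult_neg_neg zero_less_power2 complex_eq_iff)

lemma Im_mobius_upper_pos: "q < p \<Longrightarrow> Im z > 0 \<Longrightarrow> Im ((z - of_real p) / (z - of_real q)) > 0"
  by (simp add: Im_mobius divide_pos_pos zero_less_power2 complex_eq_iff)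

lemma Im_mobius_lower_neg: "q < p \<Longrightarrow> Im z < 0 \<Longrightarrow> Im ((z - of_real p) / (z - of_real q)) < 0"
  by (simp add: Im_mobius divide_neg_pos mult_pos_neg zero_less_power2 complex_eq_iff)

text \<open>Boundary value of \<open>\<gamma>\<close> from below at a point \<open>s\<close> of the cut; from above it is \<open>\<i>\<close> times this.\<close>

definition gam_cut :: "real \<Rightarrow> real \<Rightarrow> real \<Rightarrow> complex" where
  "gam_cut a b s = exp (1/4 * (of_real (ln ((s - b) / (a - s))) - \<i> * pi))"

lemma gam_cut_nonzero: "gam_cut a b s \<noteq> 0"
  unfolding gam_cut_def by simp

context
  fixes a b s :: real
  assumes ab: "a < s" "s < b"
begin

lemma tendsto_rfun_upper: "(rfun a b \<longlongrightarrow> - \<i> * of_real (sqrt ((s - a) / (b - s)))) (at (of_real s) within {z. Im z > 0})"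
proof -
  have l: "((\<lambda>z. - \<i> * csqrt (- ((z - of_real a) / (z - of_real b)))) \<longlongrightarrow> - \<i> * of_real (sqrt ((s - a) / (b - s))))
      (at (of_real s) within {z. Im z > 0})"
    using ab by (intro tendsto_intros tendsto_csqrt_pos_real tendsto_neg_mobius_real) auto
  have "\<forall>\<^sub>F z in at (of_real s) within {z. Im z > 0}. - \<i> * csqrt (- ((z - of_real a) / (z - of_real b))) = rfun a b z"
    using eventually_at_within_mem[of "{z. Im z > 0}" "of_real s"]
  proof eventually_elim
    case (elim z)
    then have "z \<noteq> of_real b" by auto
    then show ?case using rfun_eq csqrt_lower_half_plane Im_mobius_upper_neg ab elim by simp
  qed
  with l show ?thesis using tendsto_cong by fastforce
qed

lemma tendsto_rfun_lower: "(rfun a b \<longlongrightarrow> \<i> * of_real (sqrt ((s - a) / (b - s)))) (at (of_real s) within {z. Im z < 0})"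
proof -
  have l: "((\<lambda>z. \<i> * csqrt (- ((z - of_real a) / (z - of_real b)))) \<longlongrightarrow> \<i> * of_real (sqrt ((s - a) / (b - s))))
      (at (of_real s) within {z. Im z < 0})"
    using ab by (intro tendsto_intros tendsto_csqrt_pos_real tendsto_neg_mobius_real) auto
  have "\<forall>\<^sub>F z in at (of_real s) within {z. Im z < 0}. \<i> * csqrt (- ((z - of_real a) / (z - of_real b))) = rfun a b z"
    using eventually_at_within_mem[of "{z. Im z < 0}" "of_real s"]
  proof eventually_elim
    case (elim z)
    then have "z \<noteq> of_real b" by auto
    then show ?case using rfun_eq csqrt_upper_half_plane Im_mobius_lower_pos ab elim by simp
  qed
  with l show ?thesis using tendsto_cong by fastforce
qed

lemma mult_sqrt_quotient: "(b - s) * sqrt ((s - a) / (b - s)) = sqrt ((s - a) * (b - s))"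
proof -
  have "(b - s) = sqrt ((b - s)\<^sup>2)" using ab by simp
  then have "(b - s) * sqrt ((s - a) / (b - s)) = sqrt ((b - s)\<^sup>2 * ((s - a) / (b - s)))"
    by (metis real_sqrt_mult)
  also have "(b - s)\<^sup>2 * ((s - a) / (b - s)) = (s - a) * (b - s)" using ab by (simp add: power2_eq_square field_simps)
  finally show ?thesis .
qed

lemma sqrtR_eq_rfun: "z \<noteq> of_real b \<Longrightarrow> sqrtR a b z = (z - of_real b) * rfun a b z"
  unfolding rfun_def by simp

lemma tendsto_sqrtR_upper: "(sqrtR a b \<longlongrightarrow> \<i> * of_real (sqrt ((s - a) * (b - s)))) (at (of_real s) within {z. Im z > 0})"
proof -
  have "((\<lambda>z. (z - of_real b) * rfun a b z) \<longlongrightarrow> (of_real s - of_real b) * (- \<i> * of_real (sqrt ((s - a) / (b - s)))))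
      (at (of_real s) within {z. Im z > 0})"
    by (intro tendsto_intros tendsto_rfun_upper)
  moreover have "(of_real s - of_real b) * (- \<i> * of_real (sqrt ((s - a) / (b - s)))) = \<i> * of_real (sqrt ((s - a) * (b - s)))"
    using mult_sqrt_quotient by (simp add: algebra_simps flip: of_real_mult of_real_diff)
  moreover have "\<forall>\<^sub>F z in at (of_real s) within {z. Im z > 0}. z \<noteq> of_real b"
    by (rule eventually_at_within_neq) (use ab in auto)
  then have "\<forall>\<^sub>F z in at (of_real s) within {z. Im z > 0}. (z - of_real b) * rfun a b z = sqrtR a b z"
    by eventually_elim (simp add: sqrtR_eq_rfun)
  ultimately show ?thesis using tendsto_cong by fastforce
qed

lemma tendsto_sqrtR_lower: "(sqrtR a b \<longlongrightarrow> - \<i> * of_real (sqrt ((s - a) * (b - s)))) (at (of_real s) within {z. Im z < 0})"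
proof -
  have "((\<lambda>z. (z - of_real b) * rfun a b z) \<longlongrightarrow> (of_real s - of_real b) * (\<i> * of_real (sqrt ((s - a) / (b - s)))))
      (at (of_real s) within {z. Im z < 0})"
    by (intro tendsto_intros tendsto_rfun_lower)
  moreover have "(of_real s - of_real b) * (\<i> * of_real (sqrt ((s - a) / (b - s)))) = - \<i> * of_real (sqrt ((s - a) * (b - s)))"
    using mult_sqrt_quotient by (simp add: algebra_simps flip: of_real_mult of_real_diff)
  moreover have "\<forall>\<^sub>F z in at (of_real s) within {z. Im z < 0}. z \<noteq> of_real b"
    by (rule eventually_at_within_neq) (use ab in auto)
  then have "\<forall>\<^sub>F z in at (of_real s) within {z. Im z < 0}. (z - of_real b) * rfun a b z = sqrtR a b z"
    by eventually_elim (simp add: sqrtR_eq_rfun)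
  ultimately show ?thesis using tendsto_cong by fastforce
qed

lemma bv_plus_sqrtR: "bv_plus (sqrtR a b) s = \<i> * of_real (sqrt ((s - a) * (b - s)))"
  unfolding bv_plus_def by (rule tendsto_Lim[OF nontrivial_upper_half_plane tendsto_sqrtR_upper])

lemma tendsto_gam_upper_cut: "(gam a b \<longlongrightarrow> \<i> * gam_cut a b s) (at (of_real s) within {z. Im z > 0})"
proof -
  have l: "((\<lambda>z. exp (1/4 * (Ln (- ((z - of_real b) / (z - of_real a))) + \<i> * pi))) \<longlongrightarrow>
        exp (1/4 * (of_real (ln ((s - b) / (a - s))) + \<i> * pi))) (at (of_real s) within {z. Im z > 0})"
    using ab by (intro tendsto_intros tendsto_Ln_pos_real tendsto_neg_mobius_real) (auto intro!: divide_neg_neg)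
  have e: "exp (1/4 * (of_real (ln ((s - b) / (a - s))) + \<i> * pi)) = \<i> * gam_cut a b s"
  proof -
    have "exp (1/4 * (of_real (ln ((s - b) / (a - s))) + \<i> * pi)) =
          exp (1/4 * (of_real (ln ((s - b) / (a - s))) - \<i> * pi)) * exp (\<i> * of_real (pi/2))"
      by (simp add: exp_add[symmetric] algebra_simps)
    then show ?thesis by (simp add: gam_cut_def exp_i_pi_half exp_i_pi_half')
  qed
  have "\<forall>\<^sub>F z in at (of_real s) within {z. Im z > 0}.
      exp (1/4 * (Ln (- ((z - of_real b) / (z - of_real a))) + \<i> * pi)) = gam a b z"
    using eventually_at_within_mem[of "{z. Im z > 0}" "of_real s"]
  proof eventually_elim
    case (elim z)
    then have zb: "z \<noteq> of_real b" and za: "z \<noteq> of_real a" by auto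
    have im: "Im (- ((z - of_real b) / (z - of_real a))) < 0" using Im_mobius_upper_pos ab elim by simp
    then have nz: "- ((z - of_real b) / (z - of_real a)) \<noteq> 0" by auto
    have "Ln ((z - of_real b) / (z - of_real a)) = Ln (- ((z - of_real b) / (z - of_real a))) + \<i> * pi"
      using Ln_minus[OF nz] im by simp
    then show ?case using gam_eq[OF zb za] by simp
  qed
  with l e show ?thesis using tendsto_cong by fastforce
qed

lemma tendsto_gam_lower_cut: "(gam a b \<longlongrightarrow> gam_cut a b s) (at (of_real s) within {z. Im z < 0})"
proof -
  have l: "((\<lambda>z. exp (1/4 * (Ln (- ((z - of_real b) / (z - of_real a))) - \<i> * pi))) \<longlongrightarrow>
        exp (1/4 * (of_real (ln ((s - b) / (a - s))) - \<i> * pi))) (at (of_real s) within {z. Im z < 0})"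
    using ab by (intro tendsto_intros tendsto_Ln_pos_real tendsto_neg_mobius_real) (auto intro!: divide_neg_neg)
  have "\<forall>\<^sub>F z in at (of_real s) within {z. Im z < 0}.
      exp (1/4 * (Ln (- ((z - of_real b) / (z - of_real a))) - \<i> * pi)) = gam a b z"
    using eventually_at_within_mem[of "{z. Im z < 0}" "of_real s"]
  proof eventually_elim
    case (elim z)
    then have zb: "z \<noteq> of_real b" and za: "z \<noteq> of_real a" by auto
    have im: "Im (- ((z - of_real b) / (z - of_real a))) > 0" using Im_mobius_lower_neg ab elim by simp
    then have nz: "- ((z - of_real b) / (z - of_real a)) \<noteq> 0" by auto
    have "Ln ((z - of_real b) / (z - of_real a)) = Ln (- ((z - of_real b) / (z - of_real a))) - \<i> * pi"
      using Ln_minus[OF nz] im by simp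
    then show ?case using gam_eq[OF zb za] by simp
  qed
  with l show ?thesis using tendsto_cong unfolding gam_cut_def by fastforce
qed

end

lemma Im_cayley: "Im ((of_real A - r) / (of_real A + r)) = - 2 * A * Im r / (cmod (of_real A + r))\<^sup>2"
  by (simp add: Im_divide cmod_power2 algebra_simps)

lemma nonpos_Reals_Im_nonzero: "Im w \<noteq> 0 \<Longrightarrow> w \<notin> \<real>\<^sub>\<le>\<^sub>0"
  by (auto simp: complex_nonpos_Reals_iff)

context
  fixes a b :: real
  assumes ab: "a < b"
begin

lemma tendsto_rfun_right: "b < x \<Longrightarrow> (rfun a b \<longlongrightarrow> of_real (sqrt ((x - a) / (x - b)))) (at (of_real x) within S)"
proof -
  assume x: "b < x"
  have l: "((\<lambda>z. csqrt ((z - of_real a) / (z - of_real b))) \<longlongrightarrow> of_real (sqrt ((x - a) / (x - b)))) (at (of_real x) within S)"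
    using x ab by (intro tendsto_csqrt_pos_real tendsto_mobius_real) auto
  have "\<forall>\<^sub>F z in at (of_real x) within S. z \<noteq> of_real b" by (rule eventually_at_within_neq) (use x in auto)
  then have "\<forall>\<^sub>F z in at (of_real x) within S. csqrt ((z - of_real a) / (z - of_real b)) = rfun a b z"
    by eventually_elim (simp add: rfun_eq)
  with l show ?thesis using tendsto_cong by fastforce
qed

lemma tendsto_gam_right: "b < x \<Longrightarrow> (gam a b \<longlongrightarrow> exp (1/4 * of_real (ln ((x - b) / (x - a))))) (at (of_real x) within S)"
proof -
  assume x: "b < x"
  have l: "((\<lambda>z. exp (1/4 * Ln ((z - of_real b) / (z - of_real a)))) \<longlongrightarrow> exp (1/4 * of_real (ln ((x - b) / (x - a))))) (at (of_real x) within S)"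
    using x ab by (intro tendsto_intros tendsto_Ln_pos_real tendsto_mobius_real) auto
  have "\<forall>\<^sub>F z in at (of_real x) within S. z \<noteq> of_real b" by (rule eventually_at_within_neq) (use x in auto)
  moreover have "\<forall>\<^sub>F z in at (of_real x) within S. z \<noteq> of_real a" by (rule eventually_at_within_neq) (use x ab in auto)
  ultimately have "\<forall>\<^sub>F z in at (of_real x) within S. exp (1/4 * Ln ((z - of_real b) / (z - of_real a))) = gam a b z"
    by eventually_elim (simp add: gam_eq)
  with l show ?thesis using tendsto_cong by fastforce
qed

lemma tendsto_sqrtR_right: "b < x \<Longrightarrow> (sqrtR a b \<longlongrightarrow> of_real (x - b) * of_real (sqrt ((x - a) / (x - b)))) (at (of_real x) within S)"
proof -
  assume x: "b < x"
  have "((\<lambda>z. (z - of_real b) * csqrt ((z - of_real a) / (z - of_real b))) \<longlongrightarrow> (of_real x - of_real b) * of_real (sqrt ((x - a) / (x - b)))) (at (of_real x) within S)"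
    using x ab by (intro tendsto_intros tendsto_csqrt_pos_real tendsto_mobius_real) auto
  then show ?thesis unfolding sqrtR_def by simp
qed

lemma holomorphic_mobius: "(\<lambda>z. (z - of_real p) / (z - of_real q)) holomorphic_on {z. Im z \<noteq> 0}"
  by (intro holomorphic_intros) (auto simp: complex_eq_iff)

lemma holomorphic_gam: "gam a b holomorphic_on {z. Im z \<noteq> 0}"
proof (rule holomorphic_transform)
  show "(\<lambda>z. exp (1/4 * Ln ((z - of_real b) / (z - of_real a)))) holomorphic_on {z. Im z \<noteq> 0}"
    using ab by (intro holomorphic_intros holomorphic_mobius) (auto intro!: nonpos_Reals_Im_nonzero simp: Im_mobius)
  show "exp (1/4 * Ln ((z - of_real b) / (z - of_real a))) = gam a b z" if "z \<in> {z. Im z \<noteq> 0}" for z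
    using that by (intro gam_eq[symmetric]) auto
qed

lemma gam_nonzero: "Im z \<noteq> 0 \<Longrightarrow> gam a b z \<noteq> 0"
  by (subst gam_eq) auto

lemma holomorphic_rfun: "rfun a b holomorphic_on {z. Im z \<noteq> 0}"
proof (rule holomorphic_transform)
  show "(\<lambda>z. csqrt ((z - of_real a) / (z - of_real b))) holomorphic_on {z. Im z \<noteq> 0}"
    using ab by (intro holomorphic_on_csqrt' holomorphic_mobius) (auto intro!: nonpos_Reals_Im_nonzero simp: Im_mobius)
  show "csqrt ((z - of_real a) / (z - of_real b)) = rfun a b z" if "z \<in> {z. Im z \<noteq> 0}" for z
    using that by (intro rfun_eq[symmetric]) auto
qed

lemma holomorphic_sqrtR: "sqrtR a b holomorphic_on {z. Im z \<noteq> 0}"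
  unfolding sqrtR_def[abs_def]
  using ab by (intro holomorphic_intros holomorphic_on_csqrt' holomorphic_mobius) (auto intro!: nonpos_Reals_Im_nonzero simp: Im_mobius)

lemma Im_rfun_upper: "Im z > 0 \<Longrightarrow> Im (rfun a b z) < 0"
  using Im_csqrt_neg[OF Im_mobius_upper_neg[OF ab]] by (subst rfun_eq) auto

lemma Im_rfun_lower: "Im z < 0 \<Longrightarrow> Im (rfun a b z) > 0"
  using Im_csqrt_pos[OF Im_mobius_lower_pos[OF ab]] by (subst rfun_eq) auto

lemma Im_rfun_nonzero: "Im z \<noteq> 0 \<Longrightarrow> Im (rfun a b z) \<noteq> 0"
  using Im_rfun_upper Im_rfun_lower by (metis less_irrefl linorder_neqE_linordered_idom)

lemma Re_rfun_nonneg: "Im z \<noteq> 0 \<Longrightarrow> Re (rfun a b z) \<ge> 0"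
  using csqrt_principal[of "(z - of_real a) / (z - of_real b)"] by (subst rfun_eq) auto

lemma holomorphic_Ffun:
  assumes A: "Aconst a b xs > 0"
  shows "Ffun a b xs holomorphic_on {z. Im z \<noteq> 0}"
  unfolding Ffun_def[abs_def]
proof (intro holomorphic_intros holomorphic_rfun)
  fix z assume z: "z \<in> {z. Im z \<noteq> 0}"
  have Re: "Re (of_real (Aconst a b xs) + rfun a b z) > 0" using Re_rfun_nonneg[of z] z A by simp
  then show "of_real (Aconst a b xs) + rfun a b z \<noteq> 0"
  proof (intro notI)
    assume "of_real (Aconst a b xs) + rfun a b z = 0"
    then have "Re (of_real (Aconst a b xs) + rfun a b z) = 0" by simp
    with Re show False by simp
  qed
  have "Im ((of_real (Aconst a b xs) - rfun a b z) / (of_real (Aconst a b xs) + rfun a b z)) \<noteq> 0"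
    unfolding Im_cayley using Im_rfun_nonzero[of z] z A Re by (auto simp: complex_eq_iff)
  then show "(of_real (Aconst a b xs) - rfun a b z) / (of_real (Aconst a b xs) + rfun a b z) \<notin> \<real>\<^sub>\<le>\<^sub>0"
    by (rule nonpos_Reals_Im_nonzero)
qed

end

section \<open>The function \<open>K\<close>\<close>

lemma le_powr_interpolate:
  fixes d R \<alpha> :: real
  assumes "0 \<le> d" "d \<le> R" "0 < \<alpha>" "\<alpha> \<le> 1"
  shows "d \<le> R powr (1 - \<alpha>) * d powr \<alpha>"
proof (cases "d = 0")
  case True then show ?thesis by simp
next
  case False
  then have dp: "d > 0" using assms by simp
  have "d = d powr (1 - \<alpha>) * d powr \<alpha>" using dp by (simp add: powr_add[symmetric])
  also have "\<dots> \<le> R powr (1 - \<alpha>) * d powr \<alpha>"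
    using assms dp by (intro mult_right_mono powr_mono2) auto
  finally show ?thesis .
qed

lemma holder_mult_lipschitz:
  fixes f \<phi> :: "real \<Rightarrow> real"
  assumes hf: "\<forall>s\<in>A. \<forall>t\<in>A. \<bar>f s - f t\<bar> \<le> C1 * \<bar>s - t\<bar> powr \<alpha>"
    and hp: "\<forall>s\<in>A. \<forall>t\<in>A. \<bar>\<phi> s - \<phi> t\<bar> \<le> L * \<bar>s - t\<bar>"
    and bf: "\<forall>s\<in>A. \<bar>f s\<bar> \<le> M" and bp: "\<forall>s\<in>A. \<bar>\<phi> s\<bar> \<le> P"
    and dR: "\<forall>s\<in>A. \<forall>t\<in>A. \<bar>s - t\<bar> \<le> R"
    and al: "0 < \<alpha>" "\<alpha> \<le> 1" and L: "L \<ge> 0" and M: "M \<ge> 0" and C1: "C1 \<ge> 0"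
  shows "\<forall>s\<in>A. \<forall>t\<in>A. \<bar>f s * \<phi> s - f t * \<phi> t\<bar> \<le> (P * C1 + M * L * R powr (1 - \<alpha>)) * \<bar>s - t\<bar> powr \<alpha>"
proof (intro ballI)
  fix s t assume s: "s \<in> A" and t: "t \<in> A"
  have "\<bar>f s * \<phi> s - f t * \<phi> t\<bar> = \<bar>(f s - f t) * \<phi> s + f t * (\<phi> s - \<phi> t)\<bar>" by (simp add: algebra_simps)
  also have "\<dots> \<le> \<bar>f s - f t\<bar> * \<bar>\<phi> s\<bar> + \<bar>f t\<bar> * \<bar>\<phi> s - \<phi> t\<bar>"
    by (metis abs_mult abs_triangle_ineq)
  also have "\<dots> \<le> (C1 * \<bar>s - t\<bar> powr \<alpha>) * P + M * (L * \<bar>s - t\<bar>)"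
    using hf hp bf bp s t C1 by (intro add_mono mult_mono) auto
  also have "M * (L * \<bar>s - t\<bar>) \<le> M * (L * (R powr (1 - \<alpha>) * \<bar>s - t\<bar> powr \<alpha>))"
    using le_powr_interpolate[of "\<bar>s - t\<bar>" R \<alpha>] dR s t al L M by (intro mult_left_mono) auto
  finally show "\<bar>f s * \<phi> s - f t * \<phi> t\<bar> \<le> (P * C1 + M * L * R powr (1 - \<alpha>)) * \<bar>s - t\<bar> powr \<alpha>"
    by (simp add: algebra_simps)
qed

lemma has_integral_inverse_sqrt_product:
  fixes a b :: real assumes ab: "a < b"
  shows "((\<lambda>s. 1 / sqrt ((s-a)*(b-s))) has_integral pi) {a..b}"
proof -
  define c where "c = 2/(b-a)"
  define e where "e = (a+b)/(b-a)"
  define u where "u s = c * s - e" for s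
  have nz: "b - a \<noteq> 0" using ab by simp
  have "u a = (- (b - a)) / (b - a)" unfolding u_def c_def e_def by (simp add: diff_divide_distrib[symmetric] algebra_simps)
  then have ua: "u a = -1" using nz by (simp add: divide_eq_eq)
  have "u b = (b - a) / (b - a)" unfolding u_def c_def e_def by (simp add: diff_divide_distrib[symmetric] algebra_simps)
  then have ub: "u b = 1" using nz by simp
  have ueq: "u x = (2 * x - a - b)/(b-a)" for x unfolding u_def c_def e_def using nz by (simp add: divide_simps)
  have "((\<lambda>s. 1 / sqrt ((s-a)*(b-s))) has_integral (arcsin (u b) - arcsin (u a))) {a..b}"
  proof (rule fundamental_theorem_of_calculus_interior)
    show "a \<le> b" using ab by simp
    have "\<forall>x\<in>{a..b}. - 1 \<le> u x \<and> u x \<le> 1" using ab by (auto simp: ueq le_divide_eq divide_le_eq)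
    then show "continuous_on {a..b} (\<lambda>s. arcsin (u s))"
      unfolding u_def using ab by (intro continuous_intros) auto
  next
    fix s assume s: "s \<in> {a<..<b}"
    have u1: "-1 < u s" "u s < 1" using s ab by (auto simp: ueq less_divide_eq divide_less_eq)
    have du: "(u has_real_derivative 2/(b-a)) (at s)"
      unfolding u_def c_def[symmetric] by (auto intro!: derivative_eq_intros)
    have d: "((\<lambda>s. arcsin (u s)) has_real_derivative (inverse (sqrt (1 - (u s)\<^sup>2)) * (2/(b-a)))) (at s)"
      by (rule DERIV_chain2[OF DERIV_arcsin[OF u1] du])
    have e1: "(u s)\<^sup>2 = (2 * s - a - b)\<^sup>2/(b-a)\<^sup>2" by (simp add: ueq power_divide)
    have e2: "1 = (b-a)\<^sup>2/(b-a)\<^sup>2" using nz by simp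
    have e3: "(b-a)\<^sup>2 - (2 * s - a - b)\<^sup>2 = 2\<^sup>2 * ((s-a)*(b-s))" by (simp add: power2_eq_square algebra_simps)
    have "1 - (u s)\<^sup>2 = (b-a)\<^sup>2/(b-a)\<^sup>2 - (2 * s - a - b)\<^sup>2/(b-a)\<^sup>2" using e1 e2 by simp
    also have "\<dots> = ((b-a)\<^sup>2 - (2 * s - a - b)\<^sup>2)/(b-a)\<^sup>2" by (rule diff_divide_distrib[symmetric])
    also have "\<dots> = (2 / (b - a))\<^sup>2 * ((s-a)*(b-s))" by (simp add: e3 power_divide)
    finally have "1 - (u s)\<^sup>2 = (2 / (b - a))\<^sup>2 * ((s-a)*(b-s))" .
    then have "sqrt (1 - (u s)\<^sup>2) = (2/(b-a)) * sqrt ((s-a)*(b-s))"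
      using ab by (simp add: real_sqrt_mult)
    then have "inverse (sqrt (1 - (u s)\<^sup>2)) * (2/(b-a)) = 1 / sqrt ((s-a)*(b-s))"
      using ab s by (simp add: field_simps)
    with d show "((\<lambda>s. arcsin (u s)) has_vector_derivative 1 / sqrt ((s-a)*(b-s))) (at s)"
      by (simp add: has_real_derivative_iff_has_vector_derivative)
  qed
  then show ?thesis by (simp add: ua ub)
qed

definition cut_sqrt :: "real \<Rightarrow> real \<Rightarrow> real \<Rightarrow> real" where
  "cut_sqrt a b s = sqrt ((s - a) * (b - s))"

lemma cut_sqrt_pos: "s \<in> {a<..<b} \<Longrightarrow> cut_sqrt a b s > 0"
  unfolding cut_sqrt_def by auto

lemma cut_sqrt_ge: "a + m \<le> s \<Longrightarrow> s \<le> b - m \<Longrightarrow> m > 0 \<Longrightarrow> cut_sqrt a b s \<ge> m"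
proof -
  assume h: "a + m \<le> s" "s \<le> b - m" "m > 0"
  have "m * m \<le> (s - a) * (b - s)" using h by (intro mult_mono) auto
  then have "sqrt (m * m) \<le> cut_sqrt a b s" unfolding cut_sqrt_def by (rule real_sqrt_le_mono)
  then show ?thesis using h by simp
qed

lemma lipschitz_inverse_cut_sqrt:
  assumes m: "m > 0" and s: "a + m \<le> s" "s \<le> b - m" and t: "a + m \<le> t" "t \<le> b - m"
  shows "\<bar>1 / cut_sqrt a b s - 1 / cut_sqrt a b t\<bar> \<le> (b - a) / (2 * m ^ 3) * \<bar>s - t\<bar>"
proof -
  define p q where "p = cut_sqrt a b s" and "q = cut_sqrt a b t"
  have pm: "p \<ge> m" and qm: "q \<ge> m" using cut_sqrt_ge s t m p_def q_def by auto
  have p2: "p\<^sup>2 = (s - a) * (b - s)" unfolding p_def cut_sqrt_def using s m by (intro real_sqrt_pow2) auto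
  have q2: "q\<^sup>2 = (t - a) * (b - t)" unfolding q_def cut_sqrt_def using t m by (intro real_sqrt_pow2) auto
  have pos: "p > 0" "q > 0" using pm qm m by auto
  have e1: "1 / p - 1 / q = (q - p) / (p * q)" using pos by (simp add: field_simps)
  have e2: "q - p = (q\<^sup>2 - p\<^sup>2) / (p + q)" using pos by (simp add: field_simps power2_eq_square algebra_simps)
  have "1 / p - 1 / q = (q\<^sup>2 - p\<^sup>2) / (p * q * (p + q))"
    unfolding e1 by (subst e2) (simp add: mult.commute)
  also have "q\<^sup>2 - p\<^sup>2 = (t - s) * (a + b - s - t)" unfolding p2 q2 by (simp add: algebra_simps)
  finally have e: "\<bar>1 / p - 1 / q\<bar> = \<bar>t - s\<bar> * \<bar>a + b - s - t\<bar> / (p * q * (p + q))"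
    using pos by (simp add: abs_mult)
  have h1: "\<bar>a + b - s - t\<bar> \<le> b - a" using s t m by auto
  have h2: "2 * m ^ 3 \<le> p * q * (p + q)"
  proof -
    have "m * m * (m + m) \<le> p * q * (p + q)" using pm qm m by (intro mult_mono add_mono) auto
    then show ?thesis by (simp add: power3_eq_cube algebra_simps)
  qed
  have "\<bar>t - s\<bar> * \<bar>a + b - s - t\<bar> / (p * q * (p + q)) \<le> \<bar>t - s\<bar> * (b - a) / (2 * m ^ 3)"
    using h1 h2 m pos by (intro frac_le mult_left_mono) auto
  then have "\<bar>1 / p - 1 / q\<bar> \<le> \<bar>t - s\<bar> * (b - a) / (2 * m ^ 3)" using e by simp
  then show ?thesis unfolding p_def q_def by (simp add: abs_minus_commute mult.commute)
qed

lemma holder_on_bounded: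
  assumes "holder_on {a..b} D" "a \<le> b"
  obtains M where "M \<ge> 0" "\<forall>s\<in>{a..b}. \<bar>D s\<bar> \<le> M"
proof -
  obtain C \<alpha> where C: "C > 0" "0 < \<alpha>"
    and hol: "\<forall>s\<in>{a..b}. \<forall>t\<in>{a..b}. \<bar>D s - D t\<bar> \<le> C * \<bar>s - t\<bar> powr \<alpha>"
    using assms(1) unfolding holder_on_def by blast
  have "\<bar>D s\<bar> \<le> \<bar>D a\<bar> + C * (b - a) powr \<alpha>" if s: "s \<in> {a..b}" for s
  proof -
    have "\<bar>D s - D a\<bar> \<le> C * \<bar>s - a\<bar> powr \<alpha>" using hol s assms(2) by (meson atLeastAtMost_iff order_refl)
    also have "\<dots> \<le> C * (b - a) powr \<alpha>" using s C by (intro mult_left_mono powr_mono2) auto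
    finally show ?thesis by linarith
  qed
  then show ?thesis using that C by (meson abs_ge_zero add_nonneg_nonneg order_less_imp_le powr_ge_zero mult_nonneg_nonneg)
qed

lemma holder_on_continuous_on:
  assumes "holder_on S D"
  shows "continuous_on S (\<lambda>s. complex_of_real (D s))"
proof -
  obtain C \<alpha> where "0 < \<alpha>" and "\<forall>s\<in>S. \<forall>t\<in>S. \<bar>D s - D t\<bar> \<le> C * \<bar>s - t\<bar> powr \<alpha>"
    using assms unfolding holder_on_def by blast
  then show ?thesis
    by (intro holder_continuous_on[of S _ C \<alpha>]) (auto simp flip: of_real_diff)
qed

text \<open>\<open>K_density a b D s\<close> is the integrand \<open>2 D(s) / (\<surd>((s-\<alpha>)(s-\<beta>)))\<^sub>+\<close> of \<open>K\<close>:
  the upper boundary value of the square root on the cut is \<open>\<i> \<surd>((s-\<alpha>)(\<beta>-s))\<close>.\<close>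

definition K_density :: "real \<Rightarrow> real \<Rightarrow> (real \<Rightarrow> real) \<Rightarrow> real \<Rightarrow> complex" where
  "K_density a b D s = 2 * of_real (D s) / (\<i> * of_real (cut_sqrt a b s))"

lemma Kfun_eq_cauchy_transform: "Kfun a b D z = sqrtR a b z / (2 * pi * \<i>) * cauchy_transform a b (K_density a b D) z"
proof -
  have "integral {a..b} (\<lambda>s. 2 * of_real (D s) / (bv_plus (sqrtR a b) s * (of_real s - z))) =
        integral {a..b} (\<lambda>s. K_density a b D s / (of_real s - z))"
  proof (rule integral_spike[of "{a, b}"])
    show "negligible {a, b}" by simp
    fix s assume "s \<in> {a..b} - {a, b}"
    then have s: "a < s" "s < b" by auto
    show "K_density a b D s / (of_real s - z) = 2 * of_real (D s) / (bv_plus (sqrtR a b) s * (of_real s - z))"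
      unfolding bv_plus_sqrtR[OF s] K_density_def cut_sqrt_def by simp
  qed
  then show ?thesis unfolding Kfun_def cauchy_transform_def by simp
qed

lemma K0_eq_integral: "K0 a b D = - 1 / (2 * pi * \<i>) * integral {a..b} (K_density a b D)"
proof -
  have "integral {a..b} (\<lambda>s. 2 * of_real (D s) / bv_plus (sqrtR a b) s) = integral {a..b} (K_density a b D)"
  proof (rule integral_spike[of "{a, b}"])
    show "negligible {a, b}" by simp
    fix s assume "s \<in> {a..b} - {a, b}"
    then have s: "a < s" "s < b" by auto
    show "K_density a b D s = 2 * of_real (D s) / bv_plus (sqrtR a b) s"
      unfolding bv_plus_sqrtR[OF s] K_density_def cut_sqrt_def by simp
  qed
  then show ?thesis unfolding K0_def by simp
qed

context
  fixes a b :: real and D :: "real \<Rightarrow> real"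
  assumes ab: "a < b" and hD: "holder_on {a..b} D"
begin

lemma absolutely_integrable_K_density: "K_density a b D absolutely_integrable_on {a..b}"
proof -
  obtain M where M: "M \<ge> 0" "\<forall>s\<in>{a..b}. \<bar>D s\<bar> \<le> M" using holder_on_bounded[OF hD] ab by auto
  have leb: "{a<..<b} \<in> sets lebesgue" by (simp add: borel_open)
  have "K_density a b D absolutely_integrable_on {a<..<b}"
  proof (rule measurable_bounded_by_integrable_imp_absolutely_integrable[OF _ leb])
    have "continuous_on {a<..<b} (K_density a b D)"
      unfolding K_density_def[abs_def] cut_sqrt_def
      by (intro continuous_intros continuous_on_subset[OF holder_on_continuous_on[OF hD]]) (auto simp: complex_eq_iff)
    then show "K_density a b D \<in> borel_measurable (lebesgue_on {a<..<b})"
      by (intro continuous_imp_measurable_on_sets_lebesgue leb)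
    have "(\<lambda>s. 1 / sqrt ((s - a) * (b - s))) integrable_on {a..b}"
      using has_integral_inverse_sqrt_product[OF ab] by blast
    then have "(\<lambda>s. 2 * M * (1 / sqrt ((s - a) * (b - s)))) integrable_on {a<..<b}"
      unfolding integrable_on_open_interval_real by (intro integrable_on_mult_right)
    then show "(\<lambda>s. 2 * M * (1 / cut_sqrt a b s)) integrable_on {a<..<b}" unfolding cut_sqrt_def .
    fix s assume s: "s \<in> {a<..<b}"
    have rp: "cut_sqrt a b s > 0" by (rule cut_sqrt_pos[OF s])
    have "norm (K_density a b D s) = 2 * \<bar>D s\<bar> / cut_sqrt a b s" using rp by (simp add: K_density_def norm_divide norm_mult)
    also have "\<dots> \<le> 2 * M / cut_sqrt a b s" using M s rp by (intro divide_right_mono) auto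
    finally show "norm (K_density a b D s) \<le> 2 * M * (1 / cut_sqrt a b s)" by simp
  qed
  then show ?thesis using absolutely_integrable_on_open_interval[where f = "K_density a b D" and a = a and b = b] by simp
qed

lemma holomorphic_Kfun: "Kfun a b D holomorphic_on {z. Im z \<noteq> 0}"
proof -
  have "cauchy_transform a b (K_density a b D) holomorphic_on {z. Im z \<noteq> 0}"
    by (rule holomorphic_on_subset[OF holomorphic_cauchy_transform[OF absolutely_integrable_K_density]]) (use ab in auto)
  then have "(\<lambda>z. sqrtR a b z / (2 * pi * \<i>) * cauchy_transform a b (K_density a b D) z) holomorphic_on {z. Im z \<noteq> 0}"
    by (intro holomorphic_intros holomorphic_sqrtR[OF ab]) auto
  then show ?thesis by (simp add: Kfun_eq_cauchy_transform[abs_def])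
qed

lemma tendsto_Kfun_right:
  assumes x: "b < x"
  shows "\<exists>Kx. (Kfun a b D \<longlongrightarrow> Kx) (at (of_real x))"
proof -
  have "of_real x \<notin> of_real ` {a..b}" using x by auto
  then have "isCont (cauchy_transform a b (K_density a b D)) (of_real x)"
    using isCont_cauchy_transform[OF absolutely_integrable_K_density] ab by simp
  then have "((\<lambda>z. sqrtR a b z / (2 * pi * \<i>) * cauchy_transform a b (K_density a b D) z) \<longlongrightarrow>
      of_real (x - b) * of_real (sqrt ((x - a) / (x - b))) / (2 * pi * \<i>) * cauchy_transform a b (K_density a b D) (of_real x))
      (at (of_real x))"
    by (intro tendsto_intros tendsto_sqrtR_right[OF ab x] isCont_tendsto_compose[of _ "cauchy_transform a b (K_density a b D)"] tendsto_ident_at) auto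
  then show ?thesis unfolding Kfun_eq_cauchy_transform[abs_def] by blast
qed

lemma K_density_holder_near:
  assumes x: "a < x" "x < b"
  defines "\<delta> \<equiv> min (x - a) (b - x) / 4"
  shows "\<exists>C \<alpha>. C \<ge> 0 \<and> \<alpha> > 0 \<and> (\<forall>s\<in>{x-2*\<delta>..x+2*\<delta>}. \<forall>t\<in>{x-2*\<delta>..x+2*\<delta>}.
           norm (K_density a b D s - K_density a b D t) \<le> C * \<bar>s - t\<bar> powr \<alpha>)"
proof -
  obtain C1 \<alpha> where h: "C1 > 0" "0 < \<alpha>" "\<alpha> \<le> 1"
    "\<forall>s\<in>{a..b}. \<forall>t\<in>{a..b}. \<bar>D s - D t\<bar> \<le> C1 * \<bar>s - t\<bar> powr \<alpha>" using hD unfolding holder_on_def by blast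
  obtain M where M: "M \<ge> 0" "\<forall>s\<in>{a..b}. \<bar>D s\<bar> \<le> M" using holder_on_bounded[OF hD] ab by auto
  have d: "\<delta> > 0" using x by (simp add: \<delta>_def)
  have d1: "\<delta> \<le> (x - a)/4" "\<delta> \<le> (b - x)/4" unfolding \<delta>_def by auto
  define m where "m = 2 * \<delta>"
  have mp: "m > 0" using d m_def by simp
  define A where "A = {x-2*\<delta>..x+2*\<delta>}"
  have Ain: "a + m \<le> s \<and> s \<le> b - m" if "s \<in> A" for s
    using that x d1 unfolding A_def m_def by auto
  have Aab: "A \<subseteq> {a..b}" using Ain mp by force
  define L where "L = (b - a) / (2 * m ^ 3)"
  have hp: "\<forall>s\<in>A. \<forall>t\<in>A. \<bar>1 / cut_sqrt a b s - 1 / cut_sqrt a b t\<bar> \<le> L * \<bar>s - t\<bar>"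
    unfolding L_def using lipschitz_inverse_cut_sqrt[OF mp] Ain by blast
  have bp: "\<forall>s\<in>A. \<bar>1 / cut_sqrt a b s\<bar> \<le> 1 / m"
  proof
    fix s assume "s \<in> A"
    then have "cut_sqrt a b s \<ge> m" using cut_sqrt_ge[OF _ _ mp] Ain by blast
    then show "\<bar>1 / cut_sqrt a b s\<bar> \<le> 1 / m" using mp by (simp add: frac_le)
  qed
  have dR: "\<forall>s\<in>A. \<forall>t\<in>A. \<bar>s - t\<bar> \<le> 4 * \<delta>" unfolding A_def by auto
  have hf: "\<forall>s\<in>A. \<forall>t\<in>A. \<bar>D s - D t\<bar> \<le> C1 * \<bar>s - t\<bar> powr \<alpha>" using h(4) Aab by blast
  have bf: "\<forall>s\<in>A. \<bar>D s\<bar> \<le> M" using M Aab by blast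
  have Lp: "L \<ge> 0" unfolding L_def using ab mp by simp
  have pr: "\<forall>s\<in>A. \<forall>t\<in>A. \<bar>D s * (1 / cut_sqrt a b s) - D t * (1 / cut_sqrt a b t)\<bar> \<le>
       (1 / m * C1 + M * L * (4 * \<delta>) powr (1 - \<alpha>)) * \<bar>s - t\<bar> powr \<alpha>"
    by (rule holder_mult_lipschitz[OF hf hp bf bp dR h(2) h(3) Lp M(1)]) (use h in simp)
  define K where "K = 1 / m * C1 + M * L * (4 * \<delta>) powr (1 - \<alpha>)"
  have Kp: "K \<ge> 0" unfolding K_def using mp h M Lp by simp
  have geq: "K_density a b D s = (- 2 * \<i>) * of_real (D s * (1 / cut_sqrt a b s))" for s
    unfolding K_density_def by (cases "cut_sqrt a b s = 0"; simp add: field_simps)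
  show ?thesis
  proof (intro exI conjI ballI)
    show "2 * K \<ge> 0" using Kp by simp
    show "\<alpha> > 0" by fact
    fix s t assume s: "s \<in> {x-2*\<delta>..x+2*\<delta>}" and t: "t \<in> {x-2*\<delta>..x+2*\<delta>}"
    have "K_density a b D s - K_density a b D t = (- 2 * \<i>) * of_real (D s * (1 / cut_sqrt a b s) - D t * (1 / cut_sqrt a b t))"
      unfolding geq by (simp only: of_real_diff right_diff_distrib)
    then have "norm (K_density a b D s - K_density a b D t) = 2 * \<bar>D s * (1 / cut_sqrt a b s) - D t * (1 / cut_sqrt a b t)\<bar>"
      by (simp only: norm_mult norm_of_real) simp
    also have "\<dots> \<le> 2 * (K * \<bar>s - t\<bar> powr \<alpha>)" using pr s t unfolding A_def K_def by simp
    finally show "norm (K_density a b D s - K_density a b D t) \<le> 2 * K * \<bar>s - t\<bar> powr \<alpha>" by simp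
  qed
qed

lemma Kfun_jump_cut:
  assumes x: "a < x" "x < b"
  shows "\<exists>Kp Km. (Kfun a b D \<longlongrightarrow> Kp) (at (of_real x) within {z. Im z > 0}) \<and>
                 (Kfun a b D \<longlongrightarrow> Km) (at (of_real x) within {z. Im z < 0}) \<and> Kp + Km = 2 * of_real (D x)"
proof -
  define \<delta> where "\<delta> = min (x - a) (b - x) / 4"
  have d: "\<delta> > 0" using x by (simp add: \<delta>_def)
  have d1: "\<delta> \<le> (x - a)/4" "\<delta> \<le> (b - x)/4" unfolding \<delta>_def by auto
  have sub: "{x - 2*\<delta> .. x + 2*\<delta>} \<subseteq> {a..b}" using x d1 d by auto
  obtain C \<alpha> where Ca: "C \<ge> 0" "\<alpha> > 0" "\<forall>s\<in>{x-2*\<delta>..x+2*\<delta>}. \<forall>t\<in>{x-2*\<delta>..x+2*\<delta>}.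
           norm (K_density a b D s - K_density a b D t) \<le> C * \<bar>s - t\<bar> powr \<alpha>"
    using K_density_holder_near[OF x] unfolding \<delta>_def by blast
  obtain P where P: "(cauchy_transform a b (K_density a b D) \<longlongrightarrow> P + \<i> * pi * K_density a b D x) (at (of_real x) within {z. Im z > 0})"
      "(cauchy_transform a b (K_density a b D) \<longlongrightarrow> P - \<i> * pi * K_density a b D x) (at (of_real x) within {z. Im z < 0})"
    using plemelj_sokhotski[OF absolutely_integrable_K_density d sub Ca(3) Ca(2) Ca(1)] by blast
  define r where "r = cut_sqrt a b x"
  have rp: "r > 0" unfolding r_def using cut_sqrt_pos x by simp
  have rr: "sqrt ((x - a) * (b - x)) = r" unfolding r_def cut_sqrt_def ..
  have up: "(Kfun a b D \<longlongrightarrow> \<i> * of_real r / (2 * pi * \<i>) * (P + \<i> * pi * K_density a b D x)) (at (of_real x) within {z. Im z > 0})"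
  proof -
    have "((\<lambda>z. sqrtR a b z / (2 * pi * \<i>) * cauchy_transform a b (K_density a b D) z) \<longlongrightarrow> \<i> * of_real r / (2 * pi * \<i>) * (P + \<i> * pi * K_density a b D x))
        (at (of_real x) within {z. Im z > 0})"
      using tendsto_sqrtR_upper[OF x] rr by (intro tendsto_intros P(1)) auto
    then show ?thesis by (simp add: Kfun_eq_cauchy_transform[abs_def])
  qed
  have lo: "(Kfun a b D \<longlongrightarrow> - \<i> * of_real r / (2 * pi * \<i>) * (P - \<i> * pi * K_density a b D x)) (at (of_real x) within {z. Im z < 0})"
  proof -
    have "((\<lambda>z. sqrtR a b z / (2 * pi * \<i>) * cauchy_transform a b (K_density a b D) z) \<longlongrightarrow> - \<i> * of_real r / (2 * pi * \<i>) * (P - \<i> * pi * K_density a b D x))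
        (at (of_real x) within {z. Im z < 0})"
      using tendsto_sqrtR_lower[OF x] rr by (intro tendsto_intros P(2)) auto
    then show ?thesis by (simp add: Kfun_eq_cauchy_transform[abs_def])
  qed
  have sum: "\<i> * of_real r / (2 * pi * \<i>) * (P + \<i> * pi * K_density a b D x) + - \<i> * of_real r / (2 * pi * \<i>) * (P - \<i> * pi * K_density a b D x)
      = 2 * of_real (D x)"
    using rp unfolding K_density_def r_def[symmetric] by (simp add: field_simps)
  show ?thesis using up lo sum by blast
qed

end

section \<open>The function \<open>F\<close>\<close>

context
  fixes a b xs :: real
  assumes ab: "a < b" and bx: "b < xs"
begin

lemma Aconst_gt_1: "Aconst a b xs > 1"
proof -
  have "(xs - a) / (xs - b) > 1" using ab bx by (simp add: field_simps)
  then show ?thesis unfolding Aconst_def by simp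
qed

text \<open>On the cut \<open>r\<^sub>+ = -r\<^sub>-\<close> is purely imaginary, so the two boundary values of \<open>(A - r)/(A + r)\<close>
  are reciprocal.\<close>

lemma Ffun_jump_cut:
  assumes x: "a < x" "x < b"
  shows "\<exists>Fp Fm. (Ffun a b xs \<longlongrightarrow> Fp) (at (of_real x) within {z. Im z > 0}) \<and>
                 (Ffun a b xs \<longlongrightarrow> Fm) (at (of_real x) within {z. Im z < 0}) \<and> Fp + Fm = 0"
proof -
  define A where "A = Aconst a b xs"
  have A: "A > 0" using Aconst_gt_1 A_def by simp
  define t where "t = sqrt ((x - a) / (b - x))"
  have t: "t > 0" using x t_def by simp
  define Q where "Q = (of_real A - (- \<i> * of_real t)) / (of_real A + (- \<i> * of_real t))"
  have den: "of_real A + (- \<i> * of_real t) \<noteq> 0" using A by (simp add: complex_eq_iff)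
  have ImQ: "Im Q \<noteq> 0"
    unfolding Q_def Im_cayley using A t den by (simp add: divide_eq_0_iff)
  have Qn: "Q \<notin> \<real>\<^sub>\<le>\<^sub>0" by (rule nonpos_Reals_Im_nonzero[OF ImQ])
  have up: "(Ffun a b xs \<longlongrightarrow> Ln Q) (at (of_real x) within {z. Im z > 0})"
  proof -
    have "((\<lambda>z. (of_real A - rfun a b z) / (of_real A + rfun a b z)) \<longlongrightarrow> Q) (at (of_real x) within {z. Im z > 0})"
      unfolding Q_def using tendsto_rfun_upper[OF x] den unfolding t_def by (intro tendsto_intros) auto
    from isCont_tendsto_compose[OF continuous_at_Ln[OF Qn] this]
    show ?thesis unfolding Ffun_def[abs_def] A_def .
  qed
  have den2: "of_real A + \<i> * of_real t \<noteq> 0" using A by (simp add: complex_eq_iff)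
  have Qi: "(of_real A - \<i> * of_real t) / (of_real A + \<i> * of_real t) = inverse Q"
    unfolding Q_def by simp
  have lo: "(Ffun a b xs \<longlongrightarrow> - Ln Q) (at (of_real x) within {z. Im z < 0})"
  proof -
    have "((\<lambda>z. (of_real A - rfun a b z) / (of_real A + rfun a b z)) \<longlongrightarrow> inverse Q) (at (of_real x) within {z. Im z < 0})"
      unfolding Qi[symmetric] using tendsto_rfun_lower[OF x] den2 unfolding t_def by (intro tendsto_intros) auto
    moreover have "isCont Ln (inverse Q)"
      by (rule continuous_at_Ln) (use Qn ImQ in \<open>auto intro!: nonpos_Reals_Im_nonzero simp: Im_inverse\<close>)
    ultimately have "((\<lambda>z. Ln ((of_real A - rfun a b z) / (of_real A + rfun a b z))) \<longlongrightarrow> Ln (inverse Q)) (at (of_real x) within {z. Im z < 0})"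
      using isCont_tendsto_compose by blast
    then show ?thesis unfolding Ffun_def[abs_def] A_def Ln_inverse[OF Qn] .
  qed
  show ?thesis using up lo by (intro exI[of _ "Ln Q"] exI[of _ "- Ln Q"]) auto
qed

lemma Ffun_arg_denominator_nonzero: "Im z \<noteq> 0 \<Longrightarrow> of_real (Aconst a b xs) + rfun a b z \<noteq> 0"
  using Re_rfun_nonneg[OF ab, of z] Aconst_gt_1 by (auto simp: complex_eq_iff)

lemma Im_Ffun_arg_upper:
  "Im z > 0 \<Longrightarrow> Im ((of_real (Aconst a b xs) - rfun a b z) / (of_real (Aconst a b xs) + rfun a b z)) > 0"
  unfolding Im_cayley using Im_rfun_upper[OF ab, of z] Aconst_gt_1 Ffun_arg_denominator_nonzero[of z]
  by (auto intro!: divide_neg_pos mult_pos_neg)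

lemma Im_Ffun_arg_lower:
  "Im z < 0 \<Longrightarrow> Im ((of_real (Aconst a b xs) - rfun a b z) / (of_real (Aconst a b xs) + rfun a b z)) < 0"
  unfolding Im_cayley using Im_rfun_lower[OF ab, of z] Aconst_gt_1 Ffun_arg_denominator_nonzero[of z]
  by (auto intro!: divide_neg_pos)

text \<open>For \<open>\<beta> < x < x\<^sup>*\<close> the quotient \<open>(A - r)/(A + r)\<close> tends to a negative number, so \<open>F\<close> crosses
  the branch cut of \<open>Ln\<close>, from opposite sides in the two half planes.\<close>

lemma Ffun_jump_right:
  assumes x: "b < x" "x < xs"
  shows "\<exists>Fp Fm. (Ffun a b xs \<longlongrightarrow> Fp) (at (of_real x) within {z. Im z > 0}) \<and>
                 (Ffun a b xs \<longlongrightarrow> Fm) (at (of_real x) within {z. Im z < 0}) \<and> Fp - Fm = 2 * pi * \<i>"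
proof -
  define A where "A = Aconst a b xs"
  have A: "A > 0" using Aconst_gt_1 A_def by simp
  define r0 where "r0 = sqrt ((x - a) / (x - b))"
  have "(x - a) * (xs - b) - (xs - a) * (x - b) = (b - a) * (xs - x)" by (simp add: algebra_simps)
  then have "(xs - a) * (x - b) < (x - a) * (xs - b)" using ab x by (smt (verit) mult_pos_pos)
  then have "(xs - a) / (xs - b) < (x - a) / (x - b)" using ab x bx by (simp add: divide_simps)
  then have r0A: "r0 > A" unfolding r0_def A_def Aconst_def by (simp add: real_sqrt_less_iff)
  define q0 where "q0 = (r0 - A) / (A + r0)"
  have q0: "q0 > 0" using r0A A unfolding q0_def by simp
  have lim: "((\<lambda>z. - ((of_real A - rfun a b z) / (of_real A + rfun a b z))) \<longlongrightarrow> of_real q0) (at (of_real x) within S)" for S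
  proof -
    have "((\<lambda>z. - ((of_real A - rfun a b z) / (of_real A + rfun a b z))) \<longlongrightarrow> - ((of_real A - of_real r0) / (of_real A + of_real r0))) (at (of_real x) within S)"
      using tendsto_rfun_right[OF ab x(1)] A r0A unfolding r0_def by (intro tendsto_intros) (auto simp flip: of_real_add)
    moreover have "- ((of_real A - of_real r0) / (of_real A + of_real r0)) = (of_real q0 :: complex)"
      unfolding q0_def using A r0A by (simp add: field_simps flip: of_real_add of_real_diff)
    ultimately show ?thesis by simp
  qed
  have "(Ffun a b xs \<longlongrightarrow> of_real (ln q0) + \<i> * pi) (at (of_real x) within {z. Im z > 0})"
    unfolding Ffun_def[abs_def] A_def[symmetric]
    by (rule tendsto_Ln_negative_real_upper[OF lim q0])
      (use eventually_at_within_mem[of "{z. Im z > 0}" "of_real x"] in \<open>eventually_elim, use Im_Ffun_arg_upper A_def in auto\<close>)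
  moreover have "(Ffun a b xs \<longlongrightarrow> of_real (ln q0) - \<i> * pi) (at (of_real x) within {z. Im z < 0})"
    unfolding Ffun_def[abs_def] A_def[symmetric]
    by (rule tendsto_Ln_negative_real_lower[OF lim q0])
      (use eventually_at_within_mem[of "{z. Im z < 0}" "of_real x"] in \<open>eventually_elim, use Im_Ffun_arg_lower A_def in auto\<close>)
  ultimately show ?thesis by (intro exI[of _ "of_real (ln q0) + \<i> * pi"] exI[of _ "of_real (ln q0) - \<i> * pi"]) auto
qed

end

section \<open>Behaviour at infinity\<close>

definition at_infinity_nonreal :: "complex filter" where "at_infinity_nonreal = inf at_infinity (principal {z. Im z \<noteq> 0})"

definition inv_approx :: "(complex \<Rightarrow> 'a::real_normed_vector) \<Rightarrow> 'a \<Rightarrow> bool" where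
  "inv_approx f L \<longleftrightarrow> (\<exists>K. \<forall>\<^sub>F z in at_infinity_nonreal. norm (f z - L) \<le> K / norm z)"

lemma eventually_at_infinity_nonreal: "eventually P at_infinity \<Longrightarrow> eventually P at_infinity_nonreal"
  unfolding at_infinity_nonreal_def eventually_inf_principal by (auto elim: eventually_mono)

lemma eventually_norm_ge_at_infinity_nonreal: "\<forall>\<^sub>F z in at_infinity_nonreal. R \<le> norm z"
  by (rule eventually_at_infinity_nonreal) (auto simp: eventually_at_infinity)

lemma eventually_Im_nonzero_at_infinity_nonreal: "\<forall>\<^sub>F z in at_infinity_nonreal. Im z \<noteq> 0"
  unfolding at_infinity_nonreal_def eventually_inf_principal by simp

lemma inv_approxI: "(\<forall>\<^sub>F z in at_infinity_nonreal. norm (f z - L) \<le> K / norm z) \<Longrightarrow> inv_approx f L"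
  unfolding inv_approx_def by blast

lemma inv_approxE: assumes "inv_approx f L" obtains K where "K \<ge> 0" "\<forall>\<^sub>F z in at_infinity_nonreal. norm (f z - L) \<le> K / norm z"
proof -
  obtain K where K: "\<forall>\<^sub>F z in at_infinity_nonreal. norm (f z - L) \<le> K / norm z" using assms inv_approx_def by blast
  have "\<forall>\<^sub>F z in at_infinity_nonreal. norm (f z - L) \<le> max K 0 / norm z"
    using K by eventually_elim (metis divide_right_mono max.cobounded1 norm_ge_zero order_trans)
  then show ?thesis using that by (meson max.cobounded2)
qed

lemma inv_approx_const: "inv_approx (\<lambda>z. c) c"
  by (rule inv_approxI[of _ _ 0]) simp

lemma inv_approx_cong: "\<forall>\<^sub>F z in at_infinity_nonreal. f z = g z \<Longrightarrow> inv_approx f L \<Longrightarrow> inv_approx g L"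
proof -
  assume e: "\<forall>\<^sub>F z in at_infinity_nonreal. f z = g z" and o: "inv_approx f L"
  then obtain K where K: "\<forall>\<^sub>F z in at_infinity_nonreal. norm (f z - L) \<le> K / norm z" unfolding inv_approx_def by blast
  have "\<forall>\<^sub>F z in at_infinity_nonreal. norm (g z - L) \<le> K / norm z" using e K by eventually_elim simp
  then show ?thesis by (rule inv_approxI)
qed

lemma inv_approx_add: "inv_approx f L1 \<Longrightarrow> inv_approx g L2 \<Longrightarrow> inv_approx (\<lambda>z. f z + g z) (L1 + L2)"
proof -
  assume "inv_approx f L1" "inv_approx g L2"
  then obtain K1 K2 where K1: "\<forall>\<^sub>F z in at_infinity_nonreal. norm (f z - L1) \<le> K1 / norm z"
    and K2: "\<forall>\<^sub>F z in at_infinity_nonreal. norm (g z - L2) \<le> K2 / norm z" unfolding inv_approx_def by blast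
  have "\<forall>\<^sub>F z in at_infinity_nonreal. norm (f z + g z - (L1 + L2)) \<le> (K1 + K2) / norm z"
    using K1 K2
  proof eventually_elim
    case (elim z)
    have "norm (f z + g z - (L1 + L2)) \<le> norm (f z - L1) + norm (g z - L2)"
      by (metis (no_types, lifting) add_diff_add norm_triangle_ineq)
    also have "\<dots> \<le> (K1 + K2) / norm z" using elim by (simp add: add_divide_distrib)
    finally show ?case .
  qed
  then show ?thesis by (rule inv_approxI)
qed

lemma inv_approx_scale: "inv_approx f L \<Longrightarrow> inv_approx (\<lambda>z. c * f z) (c * L)" for f :: "complex \<Rightarrow> 'a::real_normed_field"
proof -
  assume "inv_approx f L"
  then obtain K where K: "\<forall>\<^sub>F z in at_infinity_nonreal. norm (f z - L) \<le> K / norm z" unfolding inv_approx_def by blast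
  have "\<forall>\<^sub>F z in at_infinity_nonreal. norm (c * f z - c * L) \<le> (norm c * K) / norm z"
    using K
  proof eventually_elim
    case (elim z)
    have "norm (c * f z - c * L) = norm c * norm (f z - L)" by (simp add: norm_mult flip: right_diff_distrib)
    also have "\<dots> \<le> norm c * (K / norm z)" using elim by (intro mult_left_mono) auto
    finally show ?case by simp
  qed
  then show ?thesis by (rule inv_approxI)
qed

lemma inv_approx_minus: "inv_approx f L \<Longrightarrow> inv_approx (\<lambda>z. - f z) (- L)" for f :: "complex \<Rightarrow> 'a::real_normed_field"
  using inv_approx_scale[of f L "- 1"] by simp

lemma inv_approx_mult:
  fixes f g :: "complex \<Rightarrow> 'a::real_normed_field"
  assumes "inv_approx f L1" "inv_approx g L2"
  shows "inv_approx (\<lambda>z. f z * g z) (L1 * L2)"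
proof -
  obtain K1 where K1: "K1 \<ge> 0" "\<forall>\<^sub>F z in at_infinity_nonreal. norm (f z - L1) \<le> K1 / norm z" using inv_approxE[OF assms(1)] by blast
  obtain K2 where K2: "K2 \<ge> 0" "\<forall>\<^sub>F z in at_infinity_nonreal. norm (g z - L2) \<le> K2 / norm z" using inv_approxE[OF assms(2)] by blast
  have "\<forall>\<^sub>F z in at_infinity_nonreal. norm (f z * g z - L1 * L2) \<le> (K1 * (norm L2 + K2) + norm L1 * K2) / norm z"
    using K1(2) K2(2) eventually_norm_ge_at_infinity_nonreal[of 1]
  proof eventually_elim
    case (elim z)
    have nz: "norm z \<ge> 1" using elim by simp
    have gb: "norm (g z) \<le> norm L2 + K2"
    proof -
      have "norm (g z) \<le> norm L2 + norm (g z - L2)" by (metis add.commute diff_add_cancel norm_triangle_ineq)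
      also have "norm (g z - L2) \<le> K2"
      proof -
        have "K2 \<le> K2 * norm z" using mult_left_mono[OF nz K2(1)] by simp
        then have "K2 / norm z \<le> K2" using nz K2(1) by (simp add: divide_le_eq)
        then show ?thesis using elim(2) by linarith
      qed
      finally show ?thesis by simp
    qed
    have "f z * g z - L1 * L2 = (f z - L1) * g z + L1 * (g z - L2)" by (simp add: algebra_simps)
    then have "norm (f z * g z - L1 * L2) \<le> norm (f z - L1) * norm (g z) + norm L1 * norm (g z - L2)"
      by (metis norm_mult norm_triangle_ineq)
    also have "\<dots> \<le> (K1 / norm z) * (norm L2 + K2) + norm L1 * (K2 / norm z)"
      using elim gb K1 K2 by (intro add_mono mult_mono mult_left_mono) auto
    also have "\<dots> = (K1 * (norm L2 + K2) + norm L1 * K2) / norm z" by (simp add: add_divide_distrib algebra_simps)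
    finally show ?case .
  qed
  then show ?thesis by (rule inv_approxI)
qed

lemma has_field_derivative_local_lipschitz:
  assumes "(\<phi> has_field_derivative d) (at L)"
  shows "\<exists>e>0. \<forall>w. norm (w - L) < e \<longrightarrow> norm (\<phi> w - \<phi> L) \<le> (norm d + 1) * norm (w - L)"
proof -
  have "((\<lambda>w. (\<phi> w - \<phi> L) / (w - L)) \<longlongrightarrow> d) (at L)"
    using assms has_field_derivative_iff by blast
  then have "\<forall>\<^sub>F w in at L. dist ((\<phi> w - \<phi> L) / (w - L)) d < 1"
    by (rule tendstoD) simp
  then obtain e where e: "e > 0" and he: "\<And>w. w \<noteq> L \<Longrightarrow> dist w L < e \<Longrightarrow> dist ((\<phi> w - \<phi> L) / (w - L)) d < 1"
    unfolding eventually_at by blast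
  show ?thesis
  proof (intro exI conjI allI impI)
    show "e > 0" by fact
    fix w assume w: "norm (w - L) < e"
    show "norm (\<phi> w - \<phi> L) \<le> (norm d + 1) * norm (w - L)"
    proof (cases "w = L")
      case True then show ?thesis by simp
    next
      case False
      have q: "norm ((\<phi> w - \<phi> L) / (w - L)) \<le> norm d + 1"
      proof -
        have "norm ((\<phi> w - \<phi> L) / (w - L)) \<le> norm d + norm ((\<phi> w - \<phi> L) / (w - L) - d)"
          by (metis add.commute diff_add_cancel norm_triangle_ineq)
        also have "norm ((\<phi> w - \<phi> L) / (w - L) - d) < 1" using he[OF False] w by (simp add: dist_norm)
        finally show ?thesis by simp
      qed
      have "\<phi> w - \<phi> L = ((\<phi> w - \<phi> L) / (w - L)) * (w - L)" using False by simp
      then have "norm (\<phi> w - \<phi> L) = norm ((\<phi> w - \<phi> L) / (w - L)) * norm (w - L)" by (metis norm_mult)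
      also have "\<dots> \<le> (norm d + 1) * norm (w - L)" using q by (intro mult_right_mono) auto
      finally show ?thesis .
    qed
  qed
qed

lemma inv_approx_compose:
  assumes d: "\<phi> field_differentiable (at L)" and f: "inv_approx f L"
  shows "inv_approx (\<lambda>z. \<phi> (f z)) (\<phi> L)"
proof -
  obtain d' where "(\<phi> has_field_derivative d') (at L)" using d field_differentiable_def by blast
  from has_field_derivative_local_lipschitz[OF this] obtain e where e: "e > 0"
    and he: "\<And>w. norm (w - L) < e \<Longrightarrow> norm (\<phi> w - \<phi> L) \<le> (norm d' + 1) * norm (w - L)" by blast
  obtain K where K: "K \<ge> 0" "\<forall>\<^sub>F z in at_infinity_nonreal. norm (f z - L) \<le> K / norm z" using inv_approxE[OF f] by blast
  have "\<forall>\<^sub>F z in at_infinity_nonreal. norm (\<phi> (f z) - \<phi> L) \<le> ((norm d' + 1) * K) / norm z"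
    using K(2) eventually_norm_ge_at_infinity_nonreal[of "(K + 1) / e"]
  proof eventually_elim
    case (elim z)
    have "(K + 1) / e > 0" using K(1) e by simp
    then have zp: "norm z > 0" using elim(2) by linarith
    have "K / norm z < e"
    proof -
      have "K < e * norm z" using elim(2) e K(1) by (simp add: field_simps) 
      then show ?thesis using zp by (simp add: field_simps)
    qed
    then have "norm (f z - L) < e" using elim(1) by simp
    then have "norm (\<phi> (f z) - \<phi> L) \<le> (norm d' + 1) * norm (f z - L)" by (rule he)
    also have "\<dots> \<le> (norm d' + 1) * (K / norm z)" using elim(1) by (intro mult_left_mono) auto
    finally show ?case by simp
  qed
  then show ?thesis by (rule inv_approxI)
qed

lemma inv_approx_inv: "inv_approx (\<lambda>z. c / (z - d)) 0"
proof -
  have "\<forall>\<^sub>F z in at_infinity_nonreal. norm (c / (z - d) - 0) \<le> (2 * norm c) / norm z"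
    using eventually_norm_ge_at_infinity_nonreal[of "2 * norm d + 1"]
  proof eventually_elim
    case (elim z)
    have h: "norm z / 2 \<le> norm (z - d)"
    proof -
      have "norm z \<le> norm (z - d) + norm d" by (metis diff_add_cancel norm_triangle_ineq)
      then show ?thesis using elim by linarith
    qed
    have zp: "norm z > 0" using elim norm_ge_zero[of d] by linarith
    have "norm (c / (z - d)) = norm c / norm (z - d)" by (simp add: norm_divide)
    also have "\<dots> \<le> norm c / (norm z / 2)" using h zp by (intro divide_left_mono mult_pos_pos) auto
    also have "\<dots> = (2 * norm c) / norm z" by simp
    finally show ?case by simp
  qed
  then show ?thesis by (rule inv_approxI)
qed

lemma inv_approx_mobius: "p \<noteq> q \<Longrightarrow> inv_approx (\<lambda>z. (z - of_real p) / (z - of_real q)) 1"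
proof -
  assume pq: "p \<noteq> q"
  have "inv_approx (\<lambda>z. 1 + of_real (q - p) / (z - of_real q)) (1 + 0)"
    by (intro inv_approx_add inv_approx_const inv_approx_inv)
  moreover have "\<forall>\<^sub>F z in at_infinity_nonreal. 1 + of_real (q - p) / (z - of_real q) = (z - of_real p) / (z - of_real q)"
    using eventually_Im_nonzero_at_infinity_nonreal
  proof eventually_elim
    case (elim z)
    then have "z - of_real q \<noteq> 0" by auto
    then show ?case by (simp add: field_simps)
  qed
  ultimately show ?thesis using inv_approx_cong by fastforce
qed

lemma one_not_in_nonpos_Reals: "(1::complex) \<notin> \<real>\<^sub>\<le>\<^sub>0" by (auto simp: complex_nonpos_Reals_iff)

context
  fixes a b :: real
  assumes ab: "a < b"
begin

lemma inv_approx_gam: "inv_approx (gam a b) 1"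
proof -
  have d: "(\<lambda>w::complex. w powr (1/4)) field_differentiable (at 1)"
    using has_field_derivative_powr[OF one_not_in_nonpos_Reals] field_differentiable_def by blast
  from inv_approx_compose[OF d inv_approx_mobius[of b a]] ab show ?thesis unfolding gam_def[abs_def] by simp
qed

lemma inv_approx_rfun: "inv_approx (rfun a b) 1"
proof -
  from inv_approx_compose[OF field_differentiable_at_csqrt[OF one_not_in_nonpos_Reals] inv_approx_mobius[of a b]] ab
  have "inv_approx (\<lambda>z. csqrt ((z - of_real a) / (z - of_real b))) 1" by simp
  moreover have "\<forall>\<^sub>F z in at_infinity_nonreal. csqrt ((z - of_real a) / (z - of_real b)) = rfun a b z"
    using eventually_Im_nonzero_at_infinity_nonreal
  proof eventually_elim
    case (elim z)
    then have "z \<noteq> of_real b" by auto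
    then show ?case by (simp add: rfun_eq)
  qed
  ultimately show ?thesis using inv_approx_cong by fastforce
qed

end

context
  fixes a b xs :: real
  assumes ab: "a < b" and bx: "b < xs"
begin

lemma inv_approx_Ffun: "inv_approx (Ffun a b xs) (F0 a b xs)"
proof -
  define A where "A = Aconst a b xs"
  have A1: "A > 1" unfolding A_def by (rule Aconst_gt_1[OF ab bx])
  have d1: "(\<lambda>r::complex. (of_real A - r) / (of_real A + r)) field_differentiable (at 1)"
    using A1 by (intro derivative_intros) (auto simp: complex_eq_iff)
  have o1: "inv_approx (\<lambda>z. (of_real A - rfun a b z) / (of_real A + rfun a b z)) ((of_real A - 1) / (of_real A + 1))"
    using inv_approx_compose[OF d1 inv_approx_rfun[OF ab]] .
  have v: "(of_real A - 1) / (of_real A + 1) = (of_real ((A - 1) / (A + 1)) :: complex)" by simp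
  have "(A - 1) / (A + 1) > 0" using A1 by simp
  then have nn: "of_real ((A - 1) / (A + 1)) \<notin> \<real>\<^sub>\<le>\<^sub>0" by (auto simp: complex_nonpos_Reals_iff)
  from inv_approx_compose[OF field_differentiable_at_Ln[OF nn] o1[unfolded v]]
  show ?thesis unfolding Ffun_def[abs_def] F0_def A_def .
qed

end

lemma cauchy_transform_mult_add_integral:
  assumes g: "g absolutely_integrable_on {a..b}" and z: "z \<notin> of_real ` {a..b}"
  shows "integral {a..b} (\<lambda>s. (w - z + of_real s) / (of_real s - z) * g s) =
    w * cauchy_transform a b g z + integral {a..b} g"
proof -
  have gz: "(\<lambda>s. g s / (of_real s - z)) integrable_on {a..b}"
    using absolutely_integrable_cauchy_kernel[OF g z] set_lebesgue_integral_eq_integral(1) by blast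
  have gI: "g integrable_on {a..b}" using g set_lebesgue_integral_eq_integral(1) by blast
  have "integral {a..b} (\<lambda>s. (w - z + of_real s) / (of_real s - z) * g s) =
      integral {a..b} (\<lambda>s. w * (g s / (of_real s - z)) + g s)"
  proof (rule integral_cong)
    fix s assume "s \<in> {a..b}"
    then have "of_real s - z \<noteq> 0" using z by auto
    then show "(w - z + of_real s) / (of_real s - z) * g s = w * (g s / (of_real s - z)) + g s"
      by (simp add: field_simps)
  qed
  also have "\<dots> = integral {a..b} (\<lambda>s. w * (g s / (of_real s - z))) + integral {a..b} g"
    by (rule integral_add[OF integrable_on_mult_right[OF gz] gI])
  also have "\<dots> = w * cauchy_transform a b g z + integral {a..b} g"
    unfolding cauchy_transform_def by (simp only: integral_mult_right)
  finally show ?thesis .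
qed

lemma norm_integral_continuous_mult_le:
  fixes g \<phi> :: "real \<Rightarrow> complex"
  assumes g: "g absolutely_integrable_on {a..b}" and \<phi>: "continuous_on {a..b} \<phi>"
    and B: "\<And>s. s \<in> {a..b} \<Longrightarrow> norm (\<phi> s) \<le> B"
  shows "norm (integral {a..b} (\<lambda>s. \<phi> s * g s)) \<le> B * integral {a..b} (\<lambda>s. norm (g s))"
proof -
  have "(\<lambda>s. \<phi> s * g s) integrable_on {a..b}"
    using absolutely_integrable_continuous_mult[OF g \<phi> compact_Icc] set_lebesgue_integral_eq_integral(1) by blast
  moreover have ng: "(\<lambda>s. norm (g s)) integrable_on {a..b}" using g absolutely_integrable_on_def by blast
  ultimately have "norm (integral {a..b} (\<lambda>s. \<phi> s * g s)) \<le> integral {a..b} (\<lambda>s. B * norm (g s))"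
    by (intro integral_norm_bound_integral integrable_on_mult_right)
      (auto simp: norm_mult intro!: mult_right_mono B)
  then show ?thesis by simp
qed

context
  fixes a b :: real
  assumes ab: "a < b"
begin

lemma norm_sqrtR_minus_le:
  assumes zb: "z \<noteq> of_real b"
  shows "norm (sqrtR a b z - z) \<le> (b - a) + \<bar>b\<bar>"
proof -
  define c where "c = csqrt ((z - of_real a) / (z - of_real b))"
  define v where "v = of_real (b - a) / (z - of_real b)"
  have zb': "z - of_real b \<noteq> 0" using zb by simp
  have c2: "c\<^sup>2 = (z - of_real a) / (z - of_real b)" unfolding c_def by simp
  have "(c - 1) * (c + 1) = v"
  proof -
    have "(c - 1) * (c + 1) = c\<^sup>2 - 1" by (simp add: power2_eq_square algebra_simps)
    also have "\<dots> = v" unfolding c2 v_def using zb' by (simp add: field_simps)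
    finally show ?thesis .
  qed
  moreover have c1: "norm (c + 1) \<ge> 1"
  proof -
    have "Re c \<ge> 0" unfolding c_def using csqrt_principal[of "(z - of_real a) / (z - of_real b)"] by auto
    then have "Re (c + 1) \<ge> 1" by simp
    then show ?thesis using abs_Re_le_cmod[of "c + 1"] by linarith
  qed
  ultimately have cm: "norm (c - 1) \<le> norm v"
  proof -
    assume e: "(c - 1) * (c + 1) = v"
    have "norm (c - 1) \<le> norm (c - 1) * norm (c + 1)" using c1 by (simp add: mult_le_cancel_left1)
    also have "\<dots> = norm v" unfolding e[symmetric] by (simp add: norm_mult)
    finally show ?thesis .
  qed
  have "sqrtR a b z - (z - of_real b) = (z - of_real b) * (c - 1)"
    unfolding sqrtR_def c_def by (simp add: algebra_simps)
  then have "norm (sqrtR a b z - (z - of_real b)) = norm (z - of_real b) * norm (c - 1)" by (simp add: norm_mult)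
  also have "\<dots> \<le> norm (z - of_real b) * norm v" using cm by (intro mult_left_mono) auto
  also have "\<dots> = b - a" unfolding v_def using zb' ab by (simp add: norm_divide del: of_real_diff)
  finally have h: "norm (sqrtR a b z - (z - of_real b)) \<le> b - a" .
  have "sqrtR a b z - z = (sqrtR a b z - (z - of_real b)) - of_real b" by simp
  then have "norm (sqrtR a b z - z) \<le> norm (sqrtR a b z - (z - of_real b)) + norm (of_real b :: complex)"
    using norm_triangle_ineq4 by metis
  then show ?thesis using h by simp
qed

end

context
  fixes a b :: real and D :: "real \<Rightarrow> real"
  assumes ab: "a < b" and hD: "holder_on {a..b} D"
begin

lemma inv_approx_Kfun: "inv_approx (Kfun a b D) (K0 a b D)"
proof -
  define g where "g = K_density a b D"
  have g: "g absolutely_integrable_on {a..b}" unfolding g_def by (rule absolutely_integrable_K_density[OF ab hD])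
  define N where "N = integral {a..b} (\<lambda>s. norm (g s))"
  define R1 where "R1 = \<bar>a\<bar> + \<bar>b\<bar>"
  define R0 where "R0 = (b - a) + \<bar>b\<bar> + R1"
  have "R1 \<ge> 0" "R0 \<ge> 0" unfolding R0_def R1_def using ab by simp_all
  have "\<forall>\<^sub>F z in at_infinity_nonreal. norm (Kfun a b D z - K0 a b D) \<le> (N * R0 / pi) / norm z"
    using eventually_Im_nonzero_at_infinity_nonreal eventually_norm_ge_at_infinity_nonreal[of "2 * R1 + 1"]
  proof eventually_elim
    case (elim z)
    have zK: "z \<notin> of_real ` {a..b}" using elim by auto
    have zpos: "norm z > 0" using elim \<open>R1 \<ge> 0\<close> by linarith
    define \<phi> where "\<phi> s = (sqrtR a b z - z + of_real s) / (of_real s - z)" for s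
    have "continuous_on {a..b} \<phi>"
      unfolding \<phi>_def[abs_def] using zK by (intro continuous_intros) auto
    moreover have "norm (\<phi> s) \<le> 2 * R0 / norm z" if s: "s \<in> {a..b}" for s
    proof -
      have sR: "\<bar>s\<bar> \<le> R1" using s unfolding R1_def by auto
      have "norm (sqrtR a b z - z + of_real s) \<le> norm (sqrtR a b z - z) + \<bar>s\<bar>"
        using norm_triangle_ineq[of "sqrtR a b z - z" "of_real s"] by simp
      also have "\<dots> \<le> R0"
        using norm_sqrtR_minus_le[OF ab, of z] elim sR unfolding R0_def by fastforce
      finally have num: "norm (sqrtR a b z - z + of_real s) \<le> R0" .
      have "norm z \<le> norm (of_real s - z) + norm (of_real s :: complex)"
        by (metis add.commute diff_add_cancel norm_minus_commute norm_triangle_ineq)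
      then have den: "norm z / 2 \<le> norm (of_real s - z)" using sR elim by simp
      have "norm (\<phi> s) \<le> R0 / (norm z / 2)"
        unfolding \<phi>_def norm_divide using num den zpos \<open>R0 \<ge> 0\<close> by (intro frac_le) auto
      then show ?thesis by (simp add: mult.commute)
    qed
    ultimately have bound: "norm (integral {a..b} (\<lambda>s. \<phi> s * g s)) \<le> 2 * R0 / norm z * N"
      unfolding N_def by (rule norm_integral_continuous_mult_le[OF g])
    have "Kfun a b D z - K0 a b D = (sqrtR a b z * cauchy_transform a b g z + integral {a..b} g) / (2 * pi * \<i>)"
      unfolding Kfun_eq_cauchy_transform K0_eq_integral g_def[symmetric] by (simp add: field_simps)
    then have "Kfun a b D z - K0 a b D = integral {a..b} (\<lambda>s. \<phi> s * g s) / (2 * pi * \<i>)"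
      unfolding \<phi>_def cauchy_transform_mult_add_integral[OF g zK] .
    then have "norm (Kfun a b D z - K0 a b D) = norm (integral {a..b} (\<lambda>s. \<phi> s * g s)) / (2 * pi)"
      by (simp add: norm_divide norm_mult)
    also have "\<dots> \<le> 2 * R0 / norm z * N / (2 * pi)"
      using bound by (intro divide_right_mono) auto
    finally show ?case by (simp add: mult.commute)
  qed
  then show ?thesis by (rule inv_approxI)
qed

end

lemma inv_approx_dressed_Pi_entry:
  assumes G: "inv_approx G 1" and M: "inv_approx M c0"
  shows "inv_approx (\<lambda>z. dressed_Pi c0 (G z) (M z) $ i $ j) (dressed_Pi c0 1 c0 $ i $ j)"
proof -
  have "Pi_diag field_differentiable (at 1)" "Pi_offdiag field_differentiable (at 1)"
    unfolding Pi_diag_def[abs_def] Pi_offdiag_def[abs_def] by (intro derivative_intros; simp)+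
  then have P: "inv_approx (\<lambda>z. Pi_diag (G z)) (Pi_diag 1)"
    and Q: "inv_approx (\<lambda>z. Pi_offdiag (G z)) (Pi_offdiag 1)"
    by (auto intro: inv_approx_compose G)
  have "(\<lambda>w. exp (- w)) field_differentiable (at c0)"
    unfolding field_differentiable_def by (rule exI) (auto intro!: derivative_eq_intros)
  moreover have "exp field_differentiable (at c0)"
    by (rule field_differentiable_within_exp)
  ultimately have En: "inv_approx (\<lambda>z. exp (- M z)) (exp (- c0))" and Ep: "inv_approx (\<lambda>z. exp (M z)) (exp c0)"
    using inv_approx_compose[OF _ M] by auto
  have entries: "inv_approx (\<lambda>z. exp c0 * Pi_diag (G z) * exp (- M z)) (exp c0 * Pi_diag 1 * exp (- c0))"
    "inv_approx (\<lambda>z. exp c0 * Pi_offdiag (G z) * exp (M z)) (exp c0 * Pi_offdiag 1 * exp c0)"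
    "inv_approx (\<lambda>z. - (exp (- c0) * Pi_offdiag (G z) * exp (- M z))) (- (exp (- c0) * Pi_offdiag 1 * exp (- c0)))"
    "inv_approx (\<lambda>z. exp (- c0) * Pi_diag (G z) * exp (M z)) (exp (- c0) * Pi_diag 1 * exp c0)"
    by (rule inv_approx_minus | rule inv_approx_mult inv_approx_const P Q En Ep)+
  show ?thesis unfolding dressed_Pi_eq mat2_nth
    by (cases "i = 1"; cases "j = 1") (simp_all only: if_True if_False simp_thms entries)
qed

lemma bigo_of_inv_approx_entries:
  assumes "\<And>i j. inv_approx (\<lambda>z. S z $ i $ j) (A $ i $ j)"
  shows "(\<lambda>z. norm (S z - A)) \<in> O[at_infinity_nonreal](\<lambda>z. 1 / norm z)"
proof -
  have "\<forall>i. \<exists>Ki. \<forall>j. \<forall>\<^sub>F z in at_infinity_nonreal. norm ((S z - A) $ i $ j) \<le> Ki j / norm z"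
    using assms unfolding inv_approx_def by (auto intro!: choice)
  then obtain K where "\<forall>i j. \<forall>\<^sub>F z in at_infinity_nonreal. norm ((S z - A) $ i $ j) \<le> K i j / norm z"
    by (auto dest!: choice)
  then have "\<forall>\<^sub>F z in at_infinity_nonreal. \<forall>i j. norm ((S z - A) $ i $ j) \<le> K i j / norm z"
    by (intro eventually_all_finite) auto
  then have "\<forall>\<^sub>F z in at_infinity_nonreal. norm (norm (S z - A)) \<le> (\<Sum>i\<in>UNIV. \<Sum>j\<in>UNIV. K i j) * norm (1 / norm z)"
  proof eventually_elim
    case (elim z)
    have "norm (S z - A) \<le> (\<Sum>i\<in>UNIV. \<Sum>j\<in>UNIV. norm ((S z - A) $ i $ j))" by (rule norm_le_sum_entries)
    also have "\<dots> \<le> (\<Sum>i\<in>UNIV. \<Sum>j\<in>UNIV. K i j / norm z)" using elim by (intro sum_mono) auto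
    finally show ?case by (simp add: sum_divide_distrib)
  qed
  then show ?thesis by (rule bigoI)
qed

section \<open>Boundary values and the jump relations\<close>

lemma bv_plus_eqI: "(f \<longlongrightarrow> L) (at (of_real x) within {z. Im z > 0}) \<Longrightarrow> bv_plus f x = L"
  unfolding bv_plus_def by (rule tendsto_Lim[OF nontrivial_upper_half_plane])

lemma bv_minus_eqI: "(f \<longlongrightarrow> L) (at (of_real x) within {z. Im z < 0}) \<Longrightarrow> bv_minus f x = L"
  unfolding bv_minus_def by (rule tendsto_Lim[OF nontrivial_lower_half_plane])

lemma exp_add_2pi_int: "exp (w + \<i> * (of_int n * (of_real pi * 2))) = exp w"
  by (simp add: exp_add exp_2pi_1_int)

lemma jump_relationI:
  assumes "(S \<longlongrightarrow> Lp) (at (of_real x) within {z. Im z > 0})"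
    and "(S \<longlongrightarrow> Lm) (at (of_real x) within {z. Im z < 0})" and "Lp = Lm ** J"
  shows "(S \<longlongrightarrow> bv_plus S x) (at (of_real x) within {z. Im z > 0}) \<and>
         (S \<longlongrightarrow> bv_minus S x) (at (of_real x) within {z. Im z < 0}) \<and> bv_plus S x = bv_minus S x ** J"
  using assms bv_plus_eqI[OF assms(1)] bv_minus_eqI[OF assms(2)] by (simp only:)

definition S_exponent :: "real \<Rightarrow> real \<Rightarrow> real \<Rightarrow> real \<Rightarrow> (real \<Rightarrow> real) \<Rightarrow> complex \<Rightarrow> complex" where
  "S_exponent a b xs u D z = Kfun a b D z + of_real (u - ubar u) * Ffun a b xs z"

definition S_exponent_inf :: "real \<Rightarrow> real \<Rightarrow> real \<Rightarrow> real \<Rightarrow> (real \<Rightarrow> real) \<Rightarrow> complex" where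
  "S_exponent_inf a b xs u D = K0 a b D + of_real (u - ubar u) * F0 a b xs"

lemma Sinf_eq_dressed_Pi_exponent:
  "Sinf a b xs u D = (\<lambda>z. dressed_Pi (S_exponent_inf a b xs u D) (gam a b z) (S_exponent a b xs u D z))"
  unfolding S_exponent_def S_exponent_inf_def by (rule ext) (rule Sinf_eq_dressed_Pi)

lemma Sinf_trivial:
  assumes "u = ubar u" and "\<forall>s\<in>{a..b}. D s = 0"
  shows "Sinf a b xs u D z = PiM a b z"
proof -
  have "integral {a..b} (\<lambda>s. 2 * of_real (D s) / (bv_plus (sqrtR a b) s * (of_real s - z))) = 0"
    and "integral {a..b} (\<lambda>s. 2 * of_real (D s) / bv_plus (sqrtR a b) s) = 0"
    by (subst integral_cong[where g = "\<lambda>s. 0"]; use assms(2) in simp)+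
  then have "Kfun a b D z = 0" "K0 a b D = 0" unfolding Kfun_def K0_def by simp_all
  then show ?thesis using assms(1) unfolding Sinf_def exp_sigma3_def by (simp add: mat2_1)
qed

context
  fixes a b xs u :: real and D :: "real \<Rightarrow> real"
  assumes ab: "a < b" and bx: "b < xs" and hD: "holder_on {a..b} D"
begin

lemma Sinf_entry_analytic: "(\<lambda>z. Sinf a b xs u D z $ i $ j) analytic_on {z. Im z \<noteq> 0}"
proof -
  have U: "open {z::complex. Im z \<noteq> 0}" by (intro open_Collect_neq continuous_intros)
  have "S_exponent a b xs u D holomorphic_on {z. Im z \<noteq> 0}"
    unfolding S_exponent_def[abs_def] using holomorphic_Kfun[OF ab hD] holomorphic_Ffun[OF ab]
      Aconst_gt_1[OF ab bx] by (intro holomorphic_intros) auto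
  then show ?thesis unfolding Sinf_eq_dressed_Pi_exponent analytic_on_open[OF U]
    by (intro holomorphic_dressed_Pi_entry holomorphic_gam[OF ab]) (auto simp: gam_nonzero[OF ab])
qed

lemma Sinf_jump_right:
  assumes x: "b < x" "x < xs"
  shows "(Sinf a b xs u D \<longlongrightarrow> bv_plus (Sinf a b xs u D) x) (at (of_real x) within {z. Im z > 0}) \<and>
    (Sinf a b xs u D \<longlongrightarrow> bv_minus (Sinf a b xs u D) x) (at (of_real x) within {z. Im z < 0}) \<and>
    bv_plus (Sinf a b xs u D) x = bv_minus (Sinf a b xs u D) x **
      mat2 (exp (- 2 * pi * \<i> * of_real u)) 0 0 (exp (2 * pi * \<i> * of_real u))"
proof -
  define c where "c = complex_of_real (u - ubar u)"
  define Gx where "Gx = exp (1/4 * of_real (ln ((x - b) / (x - a))) :: complex)"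
  obtain Kx where K: "(Kfun a b D \<longlongrightarrow> Kx) (at (of_real x))"
    using tendsto_Kfun_right[OF ab hD x(1)] by blast
  obtain Fp Fm where F: "(Ffun a b xs \<longlongrightarrow> Fp) (at (of_real x) within {z. Im z > 0})"
    "(Ffun a b xs \<longlongrightarrow> Fm) (at (of_real x) within {z. Im z < 0})" and jump: "Fp - Fm = 2 * pi * \<i>"
    using Ffun_jump_right[OF ab bx x] by blast
  have limit: "(Sinf a b xs u D \<longlongrightarrow> dressed_Pi (S_exponent_inf a b xs u D) Gx (Kx + c * F')) (at (of_real x) within T)"
    if "(Ffun a b xs \<longlongrightarrow> F') (at (of_real x) within T)" for T F'
  proof -
    have M: "(S_exponent a b xs u D \<longlongrightarrow> Kx + c * F') (at (of_real x) within T)"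
      unfolding S_exponent_def[abs_def] c_def by (rule tendsto_add[OF tendsto_within_subset[OF K subset_UNIV] tendsto_mult[OF tendsto_const that]])
    have G: "(gam a b \<longlongrightarrow> Gx) (at (of_real x) within T)"
      unfolding Gx_def by (rule tendsto_gam_right[OF ab x(1)])
    have "Gx \<noteq> 0" unfolding Gx_def by simp
    then show ?thesis unfolding Sinf_eq_dressed_Pi_exponent by (rule tendsto_dressed_Pi[OF G M])
  qed
  define n where "n = \<lfloor>u + 1/2\<rfloor>"
  have c_eq: "c = of_real u - of_int n" unfolding c_def ubar_def n_def by simp
  have dif: "(Kx + c * Fp) - (Kx + c * Fm) = c * (2 * pi * \<i>)"
    using jump by (simp add: algebra_simps flip: right_diff_distrib)
  have "- ((Kx + c * Fp) - (Kx + c * Fm)) = - 2 * pi * \<i> * of_real u + \<i> * (of_int n * (of_real pi * 2))"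
    unfolding dif unfolding c_eq by (simp add: algebra_simps)
  then have e1: "exp (- ((Kx + c * Fp) - (Kx + c * Fm))) = exp (- 2 * pi * \<i> * of_real u)"
    by (simp only: exp_add_2pi_int)
  have "(Kx + c * Fp) - (Kx + c * Fm) = 2 * pi * \<i> * of_real u + \<i> * (of_int (- n) * (of_real pi * 2))"
    unfolding dif unfolding c_eq by (simp add: algebra_simps)
  then have e2: "exp ((Kx + c * Fp) - (Kx + c * Fm)) = exp (2 * pi * \<i> * of_real u)"
    by (simp only: exp_add_2pi_int)
  show ?thesis
    using dressed_Pi_diagonal_jump[of "S_exponent_inf a b xs u D" Gx "Kx + c * Fp" "Kx + c * Fm"]
    unfolding e1 e2 by (rule jump_relationI[OF limit[OF F(1)] limit[OF F(2)]])
qed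

lemma Sinf_jump_cut:
  assumes x: "a < x" "x < b"
  shows "(Sinf a b xs u D \<longlongrightarrow> bv_plus (Sinf a b xs u D) x) (at (of_real x) within {z. Im z > 0}) \<and>
    (Sinf a b xs u D \<longlongrightarrow> bv_minus (Sinf a b xs u D) x) (at (of_real x) within {z. Im z < 0}) \<and>
    bv_plus (Sinf a b xs u D) x = bv_minus (Sinf a b xs u D) x **
      mat2 0 (exp (2 * of_real (D x))) (- exp (- 2 * of_real (D x))) 0"
proof -
  define c where "c = complex_of_real (u - ubar u)"
  obtain Kp Km where K: "(Kfun a b D \<longlongrightarrow> Kp) (at (of_real x) within {z. Im z > 0})"
      "(Kfun a b D \<longlongrightarrow> Km) (at (of_real x) within {z. Im z < 0})" and K_sum: "Kp + Km = 2 * of_real (D x)"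
    using Kfun_jump_cut[OF ab hD x] by blast
  obtain Fp Fm where F: "(Ffun a b xs \<longlongrightarrow> Fp) (at (of_real x) within {z. Im z > 0})"
      "(Ffun a b xs \<longlongrightarrow> Fm) (at (of_real x) within {z. Im z < 0})" and F_sum: "Fp + Fm = 0"
    using Ffun_jump_cut[OF ab bx x] by blast
  have up: "(Sinf a b xs u D \<longlongrightarrow> dressed_Pi (S_exponent_inf a b xs u D) (\<i> * gam_cut a b x) (Kp + c * Fp))
      (at (of_real x) within {z. Im z > 0})"
    unfolding Sinf_eq_dressed_Pi_exponent S_exponent_def[abs_def] c_def
    by (intro tendsto_dressed_Pi tendsto_intros tendsto_gam_upper_cut[OF x] K F) (simp add: gam_cut_nonzero)
  have lo: "(Sinf a b xs u D \<longlongrightarrow> dressed_Pi (S_exponent_inf a b xs u D) (gam_cut a b x) (Km + c * Fm))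
      (at (of_real x) within {z. Im z < 0})"
    unfolding Sinf_eq_dressed_Pi_exponent S_exponent_def[abs_def] c_def
    by (intro tendsto_dressed_Pi tendsto_intros tendsto_gam_lower_cut[OF x] K F gam_cut_nonzero)
  have "(Kp + c * Fp) + (Km + c * Fm) = (Kp + Km) + c * (Fp + Fm)" by (simp add: algebra_simps)
  then have "(Kp + c * Fp) + (Km + c * Fm) = 2 * of_real (D x)" using K_sum F_sum by simp
  from dressed_Pi_rotation_jump[OF refl this gam_cut_nonzero]
  have "dressed_Pi (S_exponent_inf a b xs u D) (\<i> * gam_cut a b x) (Kp + c * Fp) =
      dressed_Pi (S_exponent_inf a b xs u D) (gam_cut a b x) (Km + c * Fm) **
      mat2 0 (exp (2 * of_real (D x))) (- exp (- 2 * of_real (D x))) 0"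
    by simp
  then show ?thesis by (rule jump_relationI[OF up lo])
qed

lemma Sinf_asymptotics:
  "(\<lambda>z. norm (Sinf a b xs u D z - mat 1)) \<in> O[at_infinity_nonreal](\<lambda>z. 1 / norm z)"
proof (rule bigo_of_inv_approx_entries)
  have "inv_approx (S_exponent a b xs u D) (S_exponent_inf a b xs u D)"
    unfolding S_exponent_def[abs_def] S_exponent_inf_def
    by (intro inv_approx_add inv_approx_scale inv_approx_Kfun[OF ab hD] inv_approx_Ffun[OF ab bx])
  from inv_approx_dressed_Pi_entry[OF inv_approx_gam[OF ab] this]
  show "inv_approx (\<lambda>z. Sinf a b xs u D z $ i $ j) (mat 1 $ i $ j)" for i j
    unfolding Sinf_eq_dressed_Pi_exponent dressed_Pi_1 .
qed

end

theorem proposition4: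
  fixes \<alpha> \<beta> xs u :: real and D :: "real \<Rightarrow> real"
  assumes "\<alpha> < \<beta>" "\<beta> < xs" "u \<ge> 0" "holder_on {\<alpha>..\<beta>} D"
  defines "S \<equiv> Sinf \<alpha> \<beta> xs u D"
  shows "(\<forall>i j. (\<lambda>z. S z $ i $ j) analytic_on {z. Im z \<noteq> 0})
    \<and> (\<forall>x. \<beta> < x \<and> x < xs \<longrightarrow>
          (S \<longlongrightarrow> bv_plus S x) (at (of_real x) within {z. Im z > 0}) \<and>
          (S \<longlongrightarrow> bv_minus S x) (at (of_real x) within {z. Im z < 0}) \<and>
          bv_plus S x = bv_minus S x ** mat2 (exp (- 2 * pi * \<i> * of_real u)) 0 0
                                             (exp (2 * pi * \<i> * of_real u)))
    \<and> (\<forall>x. \<alpha> < x \<and> x < \<beta> \<longrightarrow>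
          (S \<longlongrightarrow> bv_plus S x) (at (of_real x) within {z. Im z > 0}) \<and>
          (S \<longlongrightarrow> bv_minus S x) (at (of_real x) within {z. Im z < 0}) \<and>
          bv_plus S x = bv_minus S x ** mat2 0 (exp (2 * of_real (D x)))
                                             (- exp (- 2 * of_real (D x))) 0)
    \<and> (\<lambda>z. norm (S z - mat 1)) \<in> O[inf at_infinity (principal {z. Im z \<noteq> 0})](\<lambda>z. 1 / norm z)
    \<and> ((u = ubar u \<and> (\<forall>s\<in>{\<alpha>..\<beta>}. D s = 0)) \<longrightarrow> (\<forall>z. S z = PiM \<alpha> \<beta> z))"
  using Sinf_entry_analytic[OF assms(1,2,4)] Sinf_jump_right[OF assms(1,2,4)]
    Sinf_jump_cut[OF assms(1,2,4)] Sinf_asymptotics[OF assms(1,2,4)] Sinf_trivial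
  unfolding S_def at_infinity_nonreal_def by blast

end
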